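(* Consider the setting described in the context, with $E=1$ local update, and suppose Assumptions A1 and A2 hold and $\mathcal{A}$ is symmetric and satisfies $\mathcal{A}\mathcal{P}_{\mathcal{U}}=\mathcal{P}_{\mathcal{U}}$, $\mathcal{P}_{\mathcal{U}}\mathcal{A}=\mathcal{P}_{\mathcal{U}}$ and $\rho(\mathcal{P}_{\mathcal{U}}-\mathcal{A})<1$. Then there exists $\bar\mu>0$ such that for every step-size $0<\mu<\bar\mu$ the iterates of the exact subspace diffusion algorithm are mean-square stable and $$\limsup_{i\to\infty}\mathbb{E}\,\|\mathcal{w}^\star-\boldsymbol{\mathcal{w}}_i\|^2 = O(\mu),$$ i.e. $\limsup_{\mu\to 0}\frac{1}{\mu}\limsup_{i\to\infty}\mathbb{E}\|\mathcal{w}^\star-\boldsymbol{\mathcal{w}}_i\|^2<\infty$.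
   Context: Setup. There are $K$ agents; agent $k$ has a risk $J_k:\mathbb{R}^M\to\mathbb{R}$. For $w_1,\dots,w_K\in\mathbb{R}^M$ write $\mathcal{w}=\mathrm{col}\{w_k\}\in\mathbb{R}^{KM}$ (vertical stacking) and $\nabla\mathcal{J}(\mathcal{w})=\mathrm{col}\{\nabla J_k(w_k)\}$. Let $\mathcal{U}\in\mathbb{R}^{KM\times P}$ have full column rank, $\mathcal{P}_{\mathcal{U}}=\mathcal{U}(\mathcal{U}^{\mathsf T}\mathcal{U})^{-1}\mathcal{U}^{\mathsf T}$, and $\mathcal{w}^\star=\mathrm{col}\{w_k^\star\}=\arg\min_{\mathcal{w}\in\mathcal{R}(\mathcal{U})}\sum_{k=1}^K J_k(w_k)$. Let $\mathcal{A}\in\mathbb{R}^{KM\times KM}$ be symmetric with $\mathcal{A}\mathcal{P}_{\mathcal{U}}=\mathcal{P}_{\mathcal{U}}$, $\mathcal{P}_{\mathcal{U}}\mathcal{A}=\mathcal{P}_{\mathcal{U}}$, $\rho(\mathcal{P}_{\mathcal{U}}-\mathcal{A})<1$ ($\rho$ = spectral radius). Set $\overline{\mathcal{A}}=\frac12(I_{KM}+\mathcal{A})$. Exact subspace diffusion with $E=1$ (network form): given step-size $\mu>0$ and arbitrary initial $\boldsymbol{\mathcal{w}}_0$, set $\boldsymbol{\psi}_0=\boldsymbol{\mathcal{w}}_0$ and for $i\ge1$: $\boldsymbol{\psi}_i=\boldsymbol{\mathcal{w}}_{i-1}-\mu\,\widehat{\nabla\mathcal{J}}(\boldsymbol{\mathcal{w}}_{i-1})$,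 $\boldsymbol{\phi}_i=\boldsymbol{\mathcal{w}}_{i-1}+\boldsymbol{\psi}_i-\boldsymbol{\psi}_{i-1}$, $\boldsymbol{\mathcal{w}}_i=\overline{\mathcal{A}}\boldsymbol{\phi}_i$, where $\widehat{\nabla\mathcal{J}}(\boldsymbol{\mathcal{w}}_{i-1})=\mathrm{col}\{\widehat{\nabla J}_k(\boldsymbol{w}_{k,i-1})\}$ is a random (stochastic) gradient approximation, and $\boldsymbol{w}_{k,i}$ is the $k$-th $M$-block of $\boldsymbol{\mathcal{w}}_i$. Assumption A1: each $J_k$ is $\nu_k$-strongly convex with $\delta_k$-Lipschitz gradient: $(\nabla J_k(x)-\nabla J_k(y))^{\mathsf T}(x-y)\ge\nu_k\|x-y\|^2$ and $\|\nabla J_k(x)-\nabla J_k(y)\|\le\delta_k\|x-y\|$ for all $x,y$, with $0<\nu_k<\delta_k$. Assumption A2: the gradient noise $\boldsymbol{s}_{k,i}(\boldsymbol{w}_{k,i-1})=\widehat{\nabla J}_k(\boldsymbol{w}_{k,i-1})-\nabla J_k(\boldsymbol{w}_{k,i-1})$ satisfies, conditionally on the past iterates: $\mathbb{E}\{\boldsymbol{s}_{k,i}\mid\boldsymbol{w}_{k,i-1}\}=0$; $\mathbb{E}\{\|\boldsymbol{s}_{k,i}\|^2\mid\boldsymbol{w}_{k,i-1}\}\le\beta_k^2\|w_k^\star-\boldsymbol{w}_{k,i-1}\|^2+\sigma_k^2$ for constants $\beta_k,\sigma_k\ge0$; and for $k\ne\ell$, $\mathbb{E}\{\boldsymbol{s}_{k,i}\boldsymbol{s}_{\ell,i}^{\mathsf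 T}\mid\boldsymbol{w}_{k,i-1},\boldsymbol{w}_{\ell,i-1}\}=0$. *)

theory Defs
  imports "HOL-Probability.Probability"
begin

text \<open>Network vectors in R^{KM} are indexed by pairs (agent k, coordinate j).
  The k-th M-block of a network vector.\<close>
definition blk :: "real^('k::finite \<times> 'm::finite) \<Rightarrow> 'k \<Rightarrow> real^'m" where
  "blk w k = (\<chi> j. w $ (k, j))"

definition netgrad :: "('k::finite \<Rightarrow> real^'m::finite \<Rightarrow> real^'m) \<Rightarrow> real^('k \<times> 'm) \<Rightarrow> real^('k \<times> 'm)" where
  "netgrad g w = (\<chi> kj. g (fst kj) (blk w (fst kj)) $ snd kj)"

definition proj_range :: "real^'p::finite^'n::finite \<Rightarrow> real^'n^'n" where
  "proj_range U = U ** matrix_inv (transpose U ** U) ** transpose U"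

definition complexify :: "real^'n::finite^'n \<Rightarrow> complex^'n^'n" where
  "complexify B = (\<chi> i j. complex_of_real (B $ i $ j))"

definition spec_radius :: "real^'n::finite^'n \<Rightarrow> real" where
  "spec_radius B = Max {cmod l | l. det (mat l - complexify B) = 0}"

end

theory Submission
  imports Defs "HOL-Computational_Algebra.Polynomial"
begin

text \<open>With \<open>Abar = (I + A)/2\<close> the combination step is inverted by \<open>I + N\<close>, where
  \<open>N = Abar\<^sup>-\<^sup>1 - I\<close> is symmetric positive semidefinite, vanishes on the range of \<open>U\<close>
  and maps onto its orthogonal complement; \<open>r = \<rho>(P - A) < 1\<close> makes it coercive,
  \<open>(1 - r)\<^sup>2 v\<bullet>Nv \<le> \<parallel>Nv\<parallel>\<^sup>2\<close>. Telescoping the recursion gives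
  \<open>w\<^sub>i\<^sub>+\<^sub>1 = \<psi>\<^sub>i\<^sub>+\<^sub>1 - N (w\<^sub>1 + \<dots> + w\<^sub>i\<^sub>+\<^sub>1)\<close>, so the error \<open>e\<^sub>i = w\<^sub>i - w\<^sup>\<star>\<close> and the dual error
  \<open>u\<^sub>i = w\<^sub>1 + \<dots> + w\<^sub>i - i w\<^sup>\<star> + \<mu> q\<close>, where \<open>N q = \<nabla>J(w\<^sup>\<star>)\<close> exists because \<open>\<nabla>J(w\<^sup>\<star>)\<close> is
  orthogonal to the range of \<open>U\<close>, satisfy
  \<open>e\<^sub>i\<^sub>+\<^sub>1 + N u\<^sub>i\<^sub>+\<^sub>1 = e\<^sub>i - \<mu>(\<nabla>J(w\<^sub>i) - \<nabla>J(w\<^sup>\<star>)) - \<mu> s\<^sub>i\<^sub>+\<^sub>1\<close> and \<open>u\<^sub>i\<^sub>+\<^sub>1 = u\<^sub>i + e\<^sub>i\<^sub>+\<^sub>1\<close>.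
  For the Lyapunov function \<open>\<parallel>e\<parallel>\<^sup>2 + e\<bullet>Ne + (1 + c) u\<bullet>Nu\<close> the noise, being conditionally
  centred with bounded conditional variance, only contributes \<open>\<mu>\<^sup>2 \<Sum>\<^sub>k \<sigma>\<^sub>k\<^sup>2\<close> in expectation,
  while strong convexity contracts the rest by \<open>1 - \<mu>\<nu>\<close> for small \<open>\<mu>\<close>. Hence the limit
  superior of \<open>E\<parallel>e\<^sub>i\<parallel>\<^sup>2\<close> is at most \<open>\<mu> \<Sum>\<^sub>k \<sigma>\<^sub>k\<^sup>2 / \<nu>\<close>.\<close>

section \<open>Self-adjoint matrices and the spectral radius\<close>

definition mat_self_adjoint :: "real^'n::finite^'n \<Rightarrow> bool" where
  "mat_self_adjoint M \<longleftrightarrow> (\<forall>a b. (M *v a) \<bullet> b = a \<bullet> (M *v b))"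

lemma mat_self_adjoint_transpose: "transpose B = B \<Longrightarrow> mat_self_adjoint (B::real^'n::finite^'n)"
  unfolding mat_self_adjoint_def by (metis dot_lmul_matrix transpose_matrix_vector)

lemma mat_self_adjoint_diff:
  "mat_self_adjoint A \<Longrightarrow> mat_self_adjoint B \<Longrightarrow> mat_self_adjoint (A - B)"
  unfolding mat_self_adjoint_def
  by (simp add: matrix_vector_mult_diff_rdistrib inner_diff_left inner_diff_right)

lemma invertible_iff_kernel_zero:
  "invertible (M::'a::field^'n::finite^'n) \<longleftrightarrow> (\<forall>x. M *v x = 0 \<longrightarrow> x = 0)"
  using invertible_left_inverse matrix_left_invertible_ker by blast

lemma matrix_inv_mult_vector:
  assumes "invertible (M::real^'n::finite^'n)"
  shows "M *v (matrix_inv M *v x) = x" "matrix_inv M *v (M *v x) = x"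
proof -
  have "\<exists>M'. M ** M' = mat 1 \<and> M' ** M = mat 1" using assms invertible_def by blast
  then have "M ** matrix_inv M = mat 1 \<and> matrix_inv M ** M = mat 1"
    unfolding matrix_inv_def by (rule someI_ex)
  then show "M *v (matrix_inv M *v x) = x" "matrix_inv M *v (M *v x) = x"
    by (simp_all add: matrix_vector_mul_assoc)
qed

lemma matrix_vector_mul_mat: "mat k *v x = k *s (x::'a::comm_semiring_1 ^ 'n::finite)"
  by (vector matrix_vector_mult_def mat_def) (simp add: if_distrib if_distribR cong del: if_weak_cong)

lemma det_mat_minus_poly:
  fixes C :: "complex^'n::finite^'n"
  shows "\<exists>p. \<forall>l. det (mat l - C) = poly p l"
proof -
  define q where "q i j = [: - C$i$j, (if i = j then 1 else 0) :]" for i j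
  define p where "p = (\<Sum>\<pi>\<in>{\<pi>. \<pi> permutes (UNIV::'n set)}.
      [:of_int (sign \<pi>):] * (\<Prod>i\<in>UNIV. q i (\<pi> i)))"
  have "det (mat l - C) = poly p l" for l
    unfolding det_def p_def poly_sum poly_mult poly_prod
    by (intro sum.cong refl arg_cong2[where f="(*)"] prod.cong) (auto simp: q_def mat_def)
  then show ?thesis by blast
qed

text \<open>Strict diagonal dominance: a nonzero kernel vector, evaluated at a coordinate of
  maximal modulus, would give \<open>cmod l \<le> \<Sum>\<^sub>j cmod (C$i$j)\<close>.\<close>
lemma det_mat_minus_nonzero:
  fixes C :: "complex^'n::finite^'n"
  assumes large: "(\<Sum>i\<in>UNIV. \<Sum>j\<in>UNIV. cmod (C$i$j)) < cmod l"
  shows "det (mat l - C) \<noteq> 0"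
proof -
  have "x = 0" if kernel: "(mat l - C) *v x = 0" for x
  proof (rule ccontr)
    assume "x \<noteq> 0"
    define m where "m = Max (range (\<lambda>i. cmod (x$i)))"
    have "m \<in> range (\<lambda>i. cmod (x$i))" unfolding m_def by (rule Max_in) auto
    then obtain i where i: "cmod (x$i) = m" by auto
    have le_m: "cmod (x$j) \<le> m" for j unfolding m_def by (intro Max_ge) auto
    obtain j where "x$j \<noteq> 0" using \<open>x \<noteq> 0\<close> by (auto simp: vec_eq_iff)
    then have "m > 0" using le_m[of j] by (meson order_less_le_trans zero_less_norm_iff)
    have "(mat l - C) *v x = l *s x - C *v x"
      by (simp add: matrix_vector_mult_diff_rdistrib matrix_vector_mul_mat)
    then have "l * x$i = (\<Sum>j\<in>UNIV. C$i$j * x$j)"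
      using kernel by (simp add: matrix_vector_mult_def vec_eq_iff)
    then have "cmod l * m = cmod (\<Sum>j\<in>UNIV. C$i$j * x$j)" using i by (metis norm_mult)
    also have "\<dots> \<le> (\<Sum>j\<in>UNIV. cmod (C$i$j)) * m"
      by (rule order.trans[OF norm_sum])
        (auto simp: sum_distrib_right norm_mult intro!: sum_mono mult_left_mono le_m)
    also have "\<dots> \<le> (\<Sum>i\<in>UNIV. \<Sum>j\<in>UNIV. cmod (C$i$j)) * m"
      using \<open>m > 0\<close> by (intro mult_right_mono member_le_sum) (auto intro: sum_nonneg)
    finally show False using large \<open>m > 0\<close> by simp
  qed
  then show ?thesis using invertible_det_nz invertible_iff_kernel_zero by blast
qed

lemma finite_eigenvalue_moduli:
  fixes C :: "complex^'n::finite^'n"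
  shows "finite {cmod l | l. det (mat l - C) = 0}"
proof -
  obtain p where p: "\<And>l. det (mat l - C) = poly p l" using det_mat_minus_poly by blast
  define S where "S = (\<Sum>i\<in>UNIV. \<Sum>j\<in>UNIV. cmod (C$i$j))"
  have "S \<ge> 0" unfolding S_def by (intro sum_nonneg) auto
  then have norm_l0: "cmod (complex_of_real (1 + S)) = 1 + S" by (simp only: norm_of_real)
  have "det (mat (complex_of_real (1 + S)) - C) \<noteq> 0"
    by (intro det_mat_minus_nonzero) (unfold norm_l0, simp add: S_def)
  then have "p \<noteq> 0" using p by auto
  then have "finite (cmod ` {l. poly p l = 0})" by (simp add: poly_roots_finite)
  moreover have "{cmod l | l. det (mat l - C) = 0} = cmod ` {l. poly p l = 0}" using p by auto
  ultimately show ?thesis by simp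
qed

lemma real_eigenvalue_le_spec_radius:
  fixes B :: "real^'n::finite^'n"
  assumes "v \<noteq> 0" and "B *v v = mu *\<^sub>R v"
  shows "\<bar>mu\<bar> \<le> spec_radius B"
proof -
  have "(mat mu - B) *v v = 0"
    using assms(2) by (simp add: matrix_vector_mult_diff_rdistrib matrix_vector_mul_mat scalar_mult_eq_scaleR)
  then have "det (mat mu - B) = 0"
    using assms(1) invertible_det_nz invertible_iff_kernel_zero by blast
  moreover have "mat (complex_of_real mu) - complexify B = complexify (mat mu - B)"
    unfolding complexify_def mat_def by (simp add: vec_eq_iff)
  moreover have "det (complexify C) = complex_of_real (det C)" for C :: "real^'n^'n"
    unfolding det_def complexify_def by simp
  ultimately have "\<bar>mu\<bar> \<in> {cmod l | l. det (mat l - complexify B) = 0}"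
    by (intro CollectI exI[of _ "complex_of_real mu"]) auto
  then show ?thesis unfolding spec_radius_def by (intro Max_ge finite_eigenvalue_moduli)
qed

text \<open>If \<open>x\<close> is a unit vector maximising \<open>norm (B *v x) = \<lambda>\<close>, then \<open>B (B x) = \<lambda>\<^sup>2 x\<close>
  (equality in Cauchy--Schwarz), so \<open>B x + \<lambda> x\<close> or, if that vanishes, \<open>x\<close> itself is an
  eigenvector for \<open>\<pm>\<lambda>\<close>.\<close>
lemma self_adjoint_maximal_stretch_eigenvalue:
  fixes B :: "real^'n::finite^'n"
  assumes sym: "mat_self_adjoint B" and nx: "norm x = 1"
    and max: "\<And>v. norm (B *v v) \<le> norm (B *v x) * norm v"
  obtains mu v where "v \<noteq> 0" "B *v v = mu *\<^sub>R v" "\<bar>mu\<bar> = norm (B *v x)"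
proof -
  define lam where "lam = norm (B *v x)"
  define b where "b = B *v x"
  define c where "c = B *v b"
  have lam0: "lam \<ge> 0" by (simp add: lam_def)
  have nb: "norm b = lam" by (simp add: b_def lam_def)
  have nc: "norm c \<le> lam * lam" using max[of b] nb by (simp add: c_def lam_def)
  have cx: "c \<bullet> x = lam * lam"
  proof -
    have "c \<bullet> x = b \<bullet> b" using sym unfolding mat_self_adjoint_def c_def b_def by blast
    then show ?thesis using nb by (simp add: power2_eq_square[symmetric] power2_norm_eq_inner[symmetric])
  qed
  have "(norm (c - (lam*lam) *\<^sub>R x))\<^sup>2
      = (norm c)\<^sup>2 - 2 * (lam*lam) * (c \<bullet> x) + (lam*lam)\<^sup>2 * (norm x)\<^sup>2"
    unfolding power2_norm_eq_inner
    by (simp add: inner_commute algebra_simps power2_eq_square)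
  also have "\<dots> \<le> 0"
    using power_mono[OF nc norm_ge_zero, of 2] cx nx by (simp add: power2_eq_square)
  finally have ceq: "c = (lam*lam) *\<^sub>R x" by simp
  show ?thesis
  proof (cases "b + lam *\<^sub>R x = 0")
    case True
    then have "B *v x = (- lam) *\<^sub>R x" unfolding b_def by (simp add: eq_neg_iff_add_eq_0 algebra_simps)
    moreover have "x \<noteq> 0" using nx by auto
    ultimately show ?thesis using that[of x "- lam"] lam0 by (simp add: lam_def)
  next
    case False
    have "B *v (b + lam *\<^sub>R x) = c + lam *\<^sub>R b"
      by (simp add: matrix_vector_right_distrib matrix_vector_mult_scaleR c_def b_def)
    also have "\<dots> = lam *\<^sub>R (b + lam *\<^sub>R x)" using ceq by (simp add: algebra_simps)
    finally show ?thesis using that[of "b + lam *\<^sub>R x" lam] False lam0 by (simp add: lam_def)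
  qed
qed

lemma self_adjoint_norm_le_spec_radius:
  fixes B :: "real^'n::finite^'n"
  assumes sym: "mat_self_adjoint B"
  shows "norm (B *v v) \<le> spec_radius B * norm v"
proof -
  have cont: "continuous_on (sphere 0 1) (\<lambda>v. norm (B *v v))"
    by (intro continuous_intros linear_continuous_on matrix_vector_mul_bounded_linear)
  obtain x where xs: "x \<in> sphere (0::real^'n) 1"
    and xmax: "\<forall>y\<in>sphere 0 1. norm (B *v y) \<le> norm (B *v x)"
    using continuous_attains_sup[OF compact_sphere _ cont] by auto
  have stretch: "norm (B *v v) \<le> norm (B *v x) * norm v" for v
  proof (cases "v = 0")
    case False
    have "norm (B *v ((1 / norm v) *\<^sub>R v)) \<le> norm (B *v x)" using xmax False by simp
    then show ?thesis using False by (simp add: matrix_vector_mult_scaleR divide_le_eq mult.commute)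
  qed simp
  have nx: "norm x = 1" using xs by simp
  obtain mu w where "w \<noteq> 0" "B *v w = mu *\<^sub>R w" "\<bar>mu\<bar> = norm (B *v x)"
    by (rule self_adjoint_maximal_stretch_eigenvalue[OF sym nx stretch])
  then have "norm (B *v x) \<le> spec_radius B" using real_eigenvalue_le_spec_radius by metis
  then show ?thesis using stretch[of v] by (meson mult_right_mono norm_ge_zero order.trans)
qed

section \<open>The orthogonal projector onto the range of \<open>U\<close>\<close>

lemma inner_transpose_right: "((U::real^'n::finite^'m::finite) *v a) \<bullet> b = a \<bullet> (transpose U *v b)"
proof -
  have "a \<bullet> (transpose U *v b) = (b v* U) \<bullet> a" by (simp add: inner_commute)
  also have "\<dots> = b \<bullet> (U *v a)" by (rule dot_lmul_matrix)
  finally show ?thesis by (simp only: inner_commute[of "U *v a" b])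
qed

lemma gram_invertible:
  fixes U :: "real^'p::finite^'n::finite"
  assumes "rank U = CARD('p)"
  shows "invertible (transpose U ** U)"
  unfolding invertible_iff_kernel_zero
proof (intro allI impI)
  fix x assume "(transpose U ** U) *v x = 0"
  moreover have "(U *v x) \<bullet> (U *v x) = x \<bullet> ((transpose U ** U) *v x)"
    by (simp only: inner_transpose_right matrix_vector_mul_assoc)
  ultimately have "U *v x = 0" by simp
  then show "x = 0" using assms full_rank_injective by (metis inj_eq matrix_vector_mult_0_right)
qed

context
  fixes U :: "real^'p::finite^'n::finite"
  assumes rank: "rank U = CARD('p)"
begin

private abbreviation "G \<equiv> matrix_inv (transpose U ** U)"

private lemma proj_range_mult_vector: "proj_range U *v x = U *v (G *v (transpose U *v x))"
  by (simp only: proj_range_def matrix_vector_mul_assoc matrix_mul_assoc)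

private lemma gram_inv_cancel: "transpose U *v (U *v (G *v y)) = y"
  using matrix_inv_mult_vector(1)[OF gram_invertible[OF rank], of y]
  by (simp only: matrix_vector_mul_assoc matrix_mul_assoc)

lemma proj_range_self_adjoint: "mat_self_adjoint (proj_range U)"
  unfolding mat_self_adjoint_def
proof (intro allI)
  fix a b
  have sym: "(proj_range U *v x) \<bullet> y = (proj_range U *v x) \<bullet> (proj_range U *v y)" for x y
    unfolding proj_range_mult_vector by (simp only: inner_transpose_right gram_inv_cancel)
  have "(proj_range U *v a) \<bullet> b = (proj_range U *v a) \<bullet> (proj_range U *v b)" by (rule sym)
  also have "\<dots> = (proj_range U *v b) \<bullet> (proj_range U *v a)" by (rule inner_commute)
  also have "\<dots> = (proj_range U *v b) \<bullet> a" by (rule sym[symmetric])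
  also have "\<dots> = a \<bullet> (proj_range U *v b)" by (rule inner_commute)
  finally show "(proj_range U *v a) \<bullet> b = a \<bullet> (proj_range U *v b)" .
qed

lemma proj_range_fixes_range: "proj_range U *v (U *v x) = U *v x"
  by (simp only: proj_range_mult_vector matrix_vector_mul_assoc[of "transpose U" U]
      matrix_inv_mult_vector(2)[OF gram_invertible[OF rank]])

lemma proj_range_idem: "proj_range U *v (proj_range U *v x) = proj_range U *v x"
  by (simp only: proj_range_mult_vector gram_inv_cancel)

lemma proj_range_orthogonal: "transpose U *v g = 0 \<Longrightarrow> proj_range U *v g = 0"
  by (simp only: proj_range_mult_vector matrix_vector_mult_0_right)

end

section \<open>The combination matrix\<close>

lemma eq_0_of_norm_le_scaled: "norm (x::'a::real_normed_vector) \<le> r * norm x \<Longrightarrow> r < 1 \<Longrightarrow> x = 0"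
  by (metis mult_le_cancel_right1 norm_le_zero_iff not_le)

locale combination_matrix =
  fixes A P :: "real^'n::finite^'n" and r :: real
  assumes A_self_adjoint: "mat_self_adjoint A"
    and P_self_adjoint: "mat_self_adjoint P"
    and P_idem: "P *v (P *v x) = P *v x"
    and A_P: "A *v (P *v x) = P *v x"
    and P_A: "P *v (A *v x) = P *v x"
    and r_less_1: "r < 1"
    and P_minus_A_bound: "norm ((P - A) *v v) \<le> r * norm v"
begin

abbreviation Abar :: "real^'n^'n" where
  "Abar \<equiv> (1/2) *\<^sub>R (mat 1 + A)"

definition N :: "real^'n^'n" where
  "N = matrix_inv Abar - mat 1"

lemma Abar_mult_vector: "Abar *v y = (1/2) *\<^sub>R (y + A *v y)"
  by (simp add: scaleR_matrix_vector_assoc[symmetric] matrix_vector_mult_add_rdistrib)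

lemma P_minus_A_mult_vector: "(P - A) *v y = P *v y - A *v y"
  by (simp add: matrix_vector_mult_diff_rdistrib)

lemma P_linear:
  "P *v (a + b) = P *v a + P *v b" "P *v (a - b) = P *v a - P *v b" "P *v (t *\<^sub>R a) = t *\<^sub>R (P *v a)"
  by (simp_all add: matrix_vector_right_distrib matrix_vector_mult_diff_distrib matrix_vector_mult_scaleR)

lemma P_P_minus_A: "P *v ((P - A) *v y) = 0"
  using P_idem P_A by (simp add: P_minus_A_mult_vector P_linear)

lemma P_minus_A_complement: "(P - A) *v y = (P - A) *v (y - P *v y)"
  using A_P P_idem by (simp add: P_minus_A_mult_vector matrix_vector_mult_diff_distrib)

lemma P_orthogonal: "(P *v y) \<bullet> (z - P *v z) = 0"
  using P_self_adjoint P_idem unfolding mat_self_adjoint_def by (simp add: inner_diff_right)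

lemma P_orthogonal_P_minus_A: "(P *v y) \<bullet> ((P - A) *v z) = 0"
  using P_self_adjoint P_P_minus_A unfolding mat_self_adjoint_def by simp

lemma Abar_invertible: "invertible Abar"
  unfolding invertible_iff_kernel_zero
proof (intro allI impI)
  fix x assume "Abar *v x = 0"
  then have x: "x + A *v x = 0" by (simp add: Abar_mult_vector)
  then have "(2::real) *\<^sub>R (P *v x) = 0" using P_A[of x] P_linear(1)[of x "A *v x"] by (simp add: scaleR_2)
  then have "P *v x = 0" by simp
  moreover have "- x = A *v x" using x by (rule add.inverse_unique)
  ultimately have "(P - A) *v x = x" by (simp add: P_minus_A_mult_vector flip: \<open>- x = A *v x\<close>)
  then have "norm x \<le> r * norm x" using P_minus_A_bound[of x] by simp
  then show "x = 0" using r_less_1 by (rule eq_0_of_norm_le_scaled)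
qed

lemma N_eq_of_Abar: "Abar *v x = y \<Longrightarrow> x = y + N *v y"
  using matrix_inv_mult_vector(2)[OF Abar_invertible]
  by (auto simp: N_def matrix_vector_mult_diff_rdistrib)

lemma N_Abar: "N *v (Abar *v y) = (1/2) *\<^sub>R (y - A *v y)"
proof -
  have "N *v (Abar *v y) = y - Abar *v y"
    using N_eq_of_Abar[OF refl, of y] by (metis add_diff_cancel_left')
  also have "\<dots> = (1/2) *\<^sub>R (y + y) - (1/2) *\<^sub>R (y + A *v y)"
    by (simp only: Abar_mult_vector scaleR_half_double)
  also have "\<dots> = (1/2) *\<^sub>R (y - A *v y)" by (simp only: scaleR_diff_right[symmetric]) simp
  finally show ?thesis .
qed

lemma Abar_surj: obtains a where "v = Abar *v a"
  using matrix_inv_mult_vector(1)[OF Abar_invertible] by metis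

lemma N_self_adjoint: "mat_self_adjoint N"
  unfolding mat_self_adjoint_def
proof (intro allI)
  fix u v
  obtain a b where ab: "u = Abar *v a" "v = Abar *v b" using Abar_surj by metis
  have "a \<bullet> (A *v b) = (A *v a) \<bullet> b" using A_self_adjoint unfolding mat_self_adjoint_def by simp
  then show "(N *v u) \<bullet> v = u \<bullet> (N *v v)"
    unfolding ab N_Abar unfolding Abar_mult_vector by (simp add: algebra_simps)
qed

text \<open>Writing \<open>A = P - (P - A)\<close> with orthogonal summands, the quadratic form of \<open>N\<close> is
  \<open>(\<parallel>a\<parallel>\<^sup>2 - \<parallel>A a\<parallel>\<^sup>2) / 4\<close>, and only the component of \<open>a\<close> orthogonal to the range of \<open>P\<close>
  contributes.\<close>
lemma N_quadratic_form:
  "(Abar *v a) \<bullet> (N *v (Abar *v a))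
     = (1/4) * ((norm (a - P *v a))\<^sup>2 - (norm ((P - A) *v (a - P *v a)))\<^sup>2)"
proof -
  have "(Abar *v a) \<bullet> (N *v (Abar *v a)) = (1/4) * ((norm a)\<^sup>2 - (norm (A *v a))\<^sup>2)"
    unfolding N_Abar unfolding Abar_mult_vector
    by (simp add: power2_norm_eq_inner inner_commute algebra_simps)
  moreover have "(norm a)\<^sup>2 = (norm (P *v a))\<^sup>2 + (norm (a - P *v a))\<^sup>2"
    using norm_add_Pythagorean[of "P *v a" "a - P *v a"] P_orthogonal[of a a]
    by (simp add: orthogonal_def)
  moreover have "(norm (A *v a))\<^sup>2 = (norm (P *v a))\<^sup>2 + (norm ((P - A) *v a))\<^sup>2"
    using norm_add_Pythagorean[of "P *v a" "- ((P - A) *v a)"] P_orthogonal_P_minus_A[of a a]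
    by (simp add: orthogonal_def P_minus_A_mult_vector norm_minus_commute inner_diff_right)
  ultimately show ?thesis using P_minus_A_complement[of a] by simp
qed

lemma N_nonneg: "0 \<le> v \<bullet> (N *v v)"
proof -
  obtain a where a: "v = Abar *v a" using Abar_surj by metis
  have "r * norm (a - P *v a) \<le> norm (a - P *v a)"
    using mult_right_mono[of r 1 "norm (a - P *v a)"] r_less_1 by simp
  then have "norm ((P - A) *v (a - P *v a)) \<le> norm (a - P *v a)"
    using P_minus_A_bound[of "a - P *v a"] by linarith
  then have "(norm ((P - A) *v (a - P *v a)))\<^sup>2 \<le> (norm (a - P *v a))\<^sup>2"
    by (simp add: power_mono)
  then show ?thesis unfolding a N_quadratic_form by simp
qed

lemma N_coercive: "(1 - r)\<^sup>2 * (v \<bullet> (N *v v)) \<le> (norm (N *v v))\<^sup>2"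
proof -
  obtain a where a: "v = Abar *v a" using Abar_surj by metis
  define z where "z = a - P *v a"
  have "N *v v = (1/2) *\<^sub>R (z + (P - A) *v z)"
    unfolding a N_Abar z_def using P_minus_A_complement[of a]
    by (simp add: P_minus_A_mult_vector algebra_simps)
  then have Nv: "norm (N *v v) = (1/2) * norm (z + (P - A) *v z)" by simp
  have "norm z - norm ((P - A) *v z) \<le> norm (z + (P - A) *v z)"
    by (rule norm_diff_ineq)
  then have "(1 - r) * norm z \<le> norm (z + (P - A) *v z)"
    unfolding left_diff_distrib using P_minus_A_bound[of z] by linarith
  then have sq: "((1 - r) * norm z)\<^sup>2 \<le> (norm (z + (P - A) *v z))\<^sup>2"
    using r_less_1 by (intro power_mono) auto
  have "v \<bullet> (N *v v) \<le> (1/4) * (norm z)\<^sup>2" unfolding a N_quadratic_form z_def[symmetric] by simp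
  then have "(1 - r)\<^sup>2 * (v \<bullet> (N *v v)) \<le> (1 - r)\<^sup>2 * ((1/4) * (norm z)\<^sup>2)"
    by (intro mult_left_mono) auto
  also have "\<dots> = (1/4) * ((1 - r) * norm z)\<^sup>2" by (simp add: power_mult_distrib)
  also have "\<dots> \<le> (1/4) * (norm (z + (P - A) *v z))\<^sup>2" using sq by simp
  also have "\<dots> = (norm (N *v v))\<^sup>2" unfolding Nv by (simp add: power_mult_distrib power2_eq_square)
  finally show ?thesis .
qed

lemma N_range_zero:
  assumes "P *v x = x"
  shows "N *v x = 0"
proof -
  have "A *v x = x" using A_P[of x] assms by simp
  then have "Abar *v x = x" by (simp add: Abar_mult_vector)
  then show ?thesis using N_Abar[of x] \<open>A *v x = x\<close> by simp
qed

text \<open>On the orthogonal complement of the range of \<open>P\<close>, \<open>N \<circ> Abar\<close> acts as \<open>(I - A)/2\<close>; adding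
  \<open>P\<close> turns this into the invertible matrix \<open>K\<close>, whose preimage of \<open>g\<close> stays in that complement.\<close>
lemma N_onto_complement:
  assumes "P *v g = 0"
  obtains q where "N *v q = g"
proof -
  define K where "K = (1/2) *\<^sub>R (mat 1 - A) + P"
  have Kv: "K *v y = (1/2) *\<^sub>R (y - A *v y) + P *v y" for y
    by (simp add: K_def matrix_vector_mult_add_rdistrib scaleR_matrix_vector_assoc[symmetric]
        matrix_vector_mult_diff_rdistrib)
  have PK: "P *v (K *v y) = P *v y" for y using P_idem P_A by (simp add: Kv P_linear)
  have "invertible K"
    unfolding invertible_iff_kernel_zero
  proof (intro allI impI)
    fix x assume Kx: "K *v x = 0"
    then have px: "P *v x = 0" using PK[of x] by simp
    then have "(P - A) *v x = - x" using Kx by (simp add: Kv P_minus_A_mult_vector)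
    then have "norm x \<le> r * norm x" using P_minus_A_bound[of x] by simp
    then show "x = 0" using r_less_1 by (rule eq_0_of_norm_le_scaled)
  qed
  define y where "y = matrix_inv K *v g"
  have y: "K *v y = g" unfolding y_def by (rule matrix_inv_mult_vector(1)[OF \<open>invertible K\<close>])
  then have "P *v y = 0" using PK[of y] assms by simp
  then have "(1/2) *\<^sub>R (y - A *v y) = g" using y by (simp add: Kv)
  then show ?thesis using that[of "Abar *v y"] by (simp only: N_Abar)
qed

end

lemma combination_matrix_proj_range:
  fixes U :: "real^'p::finite^'n::finite" and A :: "real^'n^'n"
  assumes U_rank: "rank U = CARD('p)" and A_sym: "transpose A = A"
    and "A ** proj_range U = proj_range U" "proj_range U ** A = proj_range U"
    and "spec_radius (proj_range U - A) < 1"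
  shows "combination_matrix A (proj_range U) (spec_radius (proj_range U - A))"
proof
  show "mat_self_adjoint A" using A_sym by (rule mat_self_adjoint_transpose)
  show "mat_self_adjoint (proj_range U)" using U_rank by (rule proj_range_self_adjoint)
  show "norm ((proj_range U - A) *v v) \<le> spec_radius (proj_range U - A) * norm v" for v
    by (intro self_adjoint_norm_le_spec_radius mat_self_adjoint_diff
        proj_range_self_adjoint[OF U_rank] mat_self_adjoint_transpose[OF A_sym])
qed (use proj_range_idem[OF U_rank] assms in \<open>simp_all add: matrix_vector_mul_assoc\<close>)

section \<open>Network gradients\<close>

lemma blk_diff: "blk (x - y) k = blk x k - blk y k"
  and blk_add: "blk (x + y) k = blk x k + blk y k"
  and blk_scaleR: "blk (c *\<^sub>R x) k = c *\<^sub>R blk x k"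
  by (simp_all add: blk_def vec_eq_iff)

lemma blk_netgrad: "blk (netgrad g w) k = g k (blk w k)"
  by (simp add: blk_def netgrad_def vec_eq_iff)

lemma inner_eq_sum_blk: "x \<bullet> y = (\<Sum>k\<in>UNIV. blk x k \<bullet> blk (y::real^('k::finite\<times>'m::finite)) k)"
proof -
  have "x \<bullet> y = (\<Sum>kj\<in>UNIV \<times> UNIV. x$kj * y$kj)" by (simp add: inner_vec_def)
  also have "\<dots> = (\<Sum>k\<in>UNIV. blk x k \<bullet> blk y k)"
    by (simp add: sum.cartesian_product inner_vec_def blk_def)
  finally show ?thesis .
qed

lemma norm_sq_eq_sum_blk: "(norm x)\<^sup>2 = (\<Sum>k\<in>UNIV. (norm (blk (x::real^('k::finite\<times>'m::finite)) k))\<^sup>2)"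
  by (simp add: power2_norm_eq_inner inner_eq_sum_blk[of x x])

lemma norm_blk_le: "norm (blk x k) \<le> norm (x::real^('k::finite\<times>'m::finite))"
proof -
  have "(norm (blk x k))\<^sup>2 \<le> (norm x)\<^sup>2"
    unfolding norm_sq_eq_sum_blk[of x] by (rule member_le_sum) auto
  then show ?thesis by (simp add: power2_le_iff_abs_le)
qed

lemma netgrad_strongly_monotone:
  assumes "\<And>k x y. (g k x - g k y) \<bullet> (x - y) \<ge> nu k * (norm (x - y))\<^sup>2"
    and "\<And>k. nu0 \<le> nu k"
  shows "(netgrad g x - netgrad g y) \<bullet> (x - y) \<ge> nu0 * (norm (x - y))\<^sup>2"
proof -
  have "nu0 * (norm (x - y))\<^sup>2 = (\<Sum>k\<in>UNIV. nu0 * (norm (blk x k - blk y k))\<^sup>2)"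
    by (simp add: norm_sq_eq_sum_blk[of "x - y"] sum_distrib_left blk_diff)
  also have "\<dots> \<le> (\<Sum>k\<in>UNIV. (g k (blk x k) - g k (blk y k)) \<bullet> (blk x k - blk y k))"
  proof (rule sum_mono)
    fix k
    have "nu0 * (norm (blk x k - blk y k))\<^sup>2 \<le> nu k * (norm (blk x k - blk y k))\<^sup>2"
      using assms(2) by (rule mult_right_mono) simp
    also have "\<dots> \<le> (g k (blk x k) - g k (blk y k)) \<bullet> (blk x k - blk y k)" by (rule assms(1))
    finally show "nu0 * (norm (blk x k - blk y k))\<^sup>2
        \<le> (g k (blk x k) - g k (blk y k)) \<bullet> (blk x k - blk y k)" .
  qed
  also have "\<dots> = (netgrad g x - netgrad g y) \<bullet> (x - y)"
    by (simp add: inner_eq_sum_blk[of "netgrad g x - netgrad g y"] blk_diff blk_netgrad)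
  finally show ?thesis .
qed

lemma netgrad_lipschitz:
  assumes "\<And>k x y. norm (g k x - g k y) \<le> delta k * norm (x - y)"
    and "\<And>k. delta k \<le> delta0" and "0 \<le> delta0"
  shows "norm (netgrad g x - netgrad g y) \<le> delta0 * norm (x - y)"
proof -
  have "(norm (netgrad g x - netgrad g y))\<^sup>2 = (\<Sum>k\<in>UNIV. (norm (g k (blk x k) - g k (blk y k)))\<^sup>2)"
    by (simp add: norm_sq_eq_sum_blk[of "netgrad g x - netgrad g y"] blk_diff blk_netgrad)
  also have "\<dots> \<le> (\<Sum>k\<in>UNIV. (delta0 * norm (blk x k - blk y k))\<^sup>2)"
  proof (intro sum_mono power_mono)
    fix k
    show "norm (g k (blk x k) - g k (blk y k)) \<le> delta0 * norm (blk x k - blk y k)"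
      using assms(1)[of k] assms(2)[of k] by (meson mult_right_mono norm_ge_zero order.trans)
  qed simp
  also have "\<dots> = (delta0 * norm (x - y))\<^sup>2"
    by (simp add: norm_sq_eq_sum_blk[of "x - y"] sum_distrib_left power_mult_distrib blk_diff)
  finally show ?thesis using \<open>0 \<le> delta0\<close> by (simp add: power2_le_iff_abs_le)
qed

lemma norm_diff_sq: "(norm (a - b))\<^sup>2 = (norm a)\<^sup>2 - 2 * (a \<bullet> b) + (norm (b::'a::real_inner))\<^sup>2"
  by (simp add: power2_norm_eq_inner inner_diff_left inner_diff_right inner_commute)

lemma gradient_step_contraction:
  fixes g :: "'a::real_inner \<Rightarrow> 'a"
  assumes monotone: "(g x - g y) \<bullet> (x - y) \<ge> nu * (norm (x - y))\<^sup>2"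
    and lipschitz: "norm (g x - g y) \<le> delta * norm (x - y)"
    and "0 \<le> mu"
  shows "(norm ((x - y) - mu *\<^sub>R (g x - g y)))\<^sup>2 \<le> (1 - 2 * mu * nu + mu\<^sup>2 * delta\<^sup>2) * (norm (x - y))\<^sup>2"
proof -
  have "(norm (g x - g y))\<^sup>2 \<le> delta\<^sup>2 * (norm (x - y))\<^sup>2"
    using power_mono[OF lipschitz norm_ge_zero, of 2] by (simp add: power_mult_distrib)
  have "(norm ((x - y) - mu *\<^sub>R (g x - g y)))\<^sup>2
      = (norm (x - y))\<^sup>2 - 2 * mu * ((g x - g y) \<bullet> (x - y)) + mu\<^sup>2 * (norm (g x - g y))\<^sup>2"
    by (simp add: norm_diff_sq power_mult_distrib inner_commute)
  also have "\<dots> \<le> (norm (x - y))\<^sup>2 - 2 * mu * (nu * (norm (x - y))\<^sup>2) + mu\<^sup>2 * (delta\<^sup>2 * (norm (x - y))\<^sup>2)"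
    using monotone \<open>0 \<le> mu\<close> \<open>(norm (g x - g y))\<^sup>2 \<le> _\<close>
    by (intro add_mono diff_mono mult_left_mono) auto
  also have "\<dots> = (1 - 2 * mu * nu + mu\<^sup>2 * delta\<^sup>2) * (norm (x - y))\<^sup>2"
    by (simp add: algebra_simps)
  finally show ?thesis .
qed

lemma constrained_minimizer_directional_derivative:
  fixes J :: "'k::finite \<Rightarrow> real^'m::finite \<Rightarrow> real"
    and U :: "real^'p::finite^('k \<times> 'm)"
  assumes grad: "\<And>k x. (J k has_derivative (\<lambda>h. gradJ k x \<bullet> h)) (at x)"
    and wstar_in: "wstar \<in> range (\<lambda>x. U *v x)"
    and wstar_min: "\<And>w. w \<in> range (\<lambda>x. U *v x) \<Longrightarrow>
                      (\<Sum>k\<in>UNIV. J k (blk wstar k)) \<le> (\<Sum>k\<in>UNIV. J k (blk w k))"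
  shows "netgrad gradJ wstar \<bullet> (U *v x) = 0"
proof -
  obtain x0 where x0: "wstar = U *v x0" using wstar_in by auto
  define v where "v = U *v x"
  define f where "f t = (\<Sum>k\<in>UNIV. J k (blk (wstar + t *\<^sub>R v) k))" for t
  define c where "c = (\<Sum>k\<in>UNIV. gradJ k (blk wstar k) \<bullet> blk v k)"
  have "((\<lambda>t. J k (blk (wstar + t *\<^sub>R v) k))
      has_derivative (\<lambda>t. gradJ k (blk wstar k) \<bullet> (t *\<^sub>R blk v k))) (at 0)" for k
  proof -
    have "((\<lambda>t. blk wstar k + t *\<^sub>R blk v k) has_derivative (\<lambda>t. t *\<^sub>R blk v k)) (at 0)"
      by (auto intro!: derivative_eq_intros)
    moreover have "(J k has_derivative (\<lambda>h. gradJ k (blk wstar k) \<bullet> h))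
        (at ((\<lambda>t. blk wstar k + t *\<^sub>R blk v k) 0))"
      using grad[of k "blk wstar k"] by simp
    ultimately show ?thesis using diff_chain_at by (fastforce simp: o_def blk_add blk_scaleR)
  qed
  then have "(f has_derivative (\<lambda>t. \<Sum>k\<in>UNIV. gradJ k (blk wstar k) \<bullet> (t *\<^sub>R blk v k))) (at 0)"
    unfolding f_def by (intro has_derivative_sum) auto
  moreover have "(\<lambda>t. \<Sum>k\<in>UNIV. gradJ k (blk wstar k) \<bullet> (t *\<^sub>R blk v k)) = (*) c"
    by (simp add: fun_eq_iff c_def sum_distrib_left sum_distrib_right mult.commute)
  ultimately have "(f has_field_derivative c) (at 0)" by (simp add: has_field_derivative_def)
  moreover have "f 0 \<le> f y" for y
  proof -
    have "wstar + y *\<^sub>R v = U *v (x0 + y *\<^sub>R x)"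
      by (simp add: x0 v_def matrix_vector_right_distrib matrix_vector_mult_scaleR)
    then show ?thesis unfolding f_def using wstar_min by simp
  qed
  ultimately have "c = 0" using DERIV_local_min[of f c 0 1] by simp
  then show ?thesis by (simp add: c_def v_def inner_eq_sum_blk blk_netgrad)
qed

lemma constrained_minimizer_gradient_orthogonal:
  fixes J :: "'k::finite \<Rightarrow> real^'m::finite \<Rightarrow> real"
    and U :: "real^'p::finite^('k \<times> 'm)"
  assumes grad: "\<And>k x. (J k has_derivative (\<lambda>h. gradJ k x \<bullet> h)) (at x)"
    and wstar_in: "wstar \<in> range (\<lambda>x. U *v x)"
    and wstar_min: "\<And>w. w \<in> range (\<lambda>x. U *v x) \<Longrightarrow>
                      (\<Sum>k\<in>UNIV. J k (blk wstar k)) \<le> (\<Sum>k\<in>UNIV. J k (blk w k))"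
  shows "transpose U *v netgrad gradJ wstar = 0"
proof -
  have "(transpose U *v netgrad gradJ wstar) \<bullet> (transpose U *v netgrad gradJ wstar)
      = (U *v (transpose U *v netgrad gradJ wstar)) \<bullet> netgrad gradJ wstar"
    by (rule inner_transpose_right[symmetric])
  also have "\<dots> = 0"
    using constrained_minimizer_directional_derivative[OF assms] by (simp add: inner_commute)
  finally show ?thesis by simp
qed

section \<open>Conditional expectations and square-integrable random vectors\<close>

lemma prob_space_sigma_finite_subalgebra:
  "prob_space M \<Longrightarrow> subalgebra M G \<Longrightarrow> sigma_finite_subalgebra M G"
  by (intro finite_measure_subalgebra_is_sigma_finite finite_measure_subalgebra.intro
      finite_measure_subalgebra_axioms.intro) (auto simp: prob_space_def)

lemma integral_le_of_nn_cond_exp_le: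
  assumes sf: "sigma_finite_subalgebra M G" and hm: "h \<in> borel_measurable M" and h0: "\<And>\<omega>. 0 \<le> h \<omega>"
    and ae: "AE \<omega> in M. nn_cond_exp M G (\<lambda>\<omega>. ennreal (h \<omega>)) \<omega> \<le> ennreal (b \<omega>)"
    and bi: "integrable M b" and b0: "\<And>\<omega>. 0 \<le> b \<omega>"
  shows "integrable M h" "integral\<^sup>L M h \<le> integral\<^sup>L M b"
proof -
  interpret sigma_finite_subalgebra M G by (rule sf)
  have "(\<integral>\<^sup>+ \<omega>. ennreal (h \<omega>) \<partial>M) = (\<integral>\<^sup>+ \<omega>. 1 * ennreal (h \<omega>) \<partial>M)" by simp
  also have "\<dots> = (\<integral>\<^sup>+ \<omega>. 1 * nn_cond_exp M G (\<lambda>\<omega>. ennreal (h \<omega>)) \<omega> \<partial>M)"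
    by (rule nn_cond_exp_intg[symmetric]) (use hm in auto)
  also have "\<dots> \<le> (\<integral>\<^sup>+ \<omega>. ennreal (b \<omega>) \<partial>M)"
    using ae by (intro nn_integral_mono_AE) auto
  also have "\<dots> = ennreal (integral\<^sup>L M b)"
    by (rule nn_integral_eq_integral) (use bi b0 in auto)
  finally have le: "(\<integral>\<^sup>+ \<omega>. ennreal (h \<omega>) \<partial>M) \<le> ennreal (integral\<^sup>L M b)" .
  have ih: "integrable M h"
  proof (rule integrableI_bounded)
    show "h \<in> borel_measurable M" by (rule hm)
    have "(\<integral>\<^sup>+ \<omega>. ennreal (norm (h \<omega>)) \<partial>M) = (\<integral>\<^sup>+ \<omega>. ennreal (h \<omega>) \<partial>M)" using h0 by simp
    then show "(\<integral>\<^sup>+ \<omega>. ennreal (norm (h \<omega>)) \<partial>M) < \<infinity>" using le by (simp add: order_le_less_trans)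
  qed
  show "integrable M h" by (rule ih)
  have "ennreal (integral\<^sup>L M h) = (\<integral>\<^sup>+ \<omega>. ennreal (h \<omega>) \<partial>M)"
    by (rule nn_integral_eq_integral[symmetric]) (use ih h0 in auto)
  then have "ennreal (integral\<^sup>L M h) \<le> ennreal (integral\<^sup>L M b)" using le by simp
  moreover have "0 \<le> integral\<^sup>L M b" using b0 by (simp add: integral_nonneg)
  ultimately show "integral\<^sup>L M h \<le> integral\<^sup>L M b" by simp
qed

lemma integral_mult_cond_exp_zero:
  assumes sf: "sigma_finite_subalgebra M G" and am: "a \<in> borel_measurable G" and bm: "b \<in> borel_measurable M"
    and int: "integrable M (\<lambda>\<omega>. a \<omega> * b \<omega>)" and ae: "AE \<omega> in M. real_cond_exp M G b \<omega> = 0"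
  shows "integral\<^sup>L M (\<lambda>\<omega>. a \<omega> * b \<omega>) = 0"
proof -
  interpret sigma_finite_subalgebra M G by (rule sf)
  have "integral\<^sup>L M (\<lambda>\<omega>. a \<omega> * b \<omega>) = integral\<^sup>L M (\<lambda>\<omega>. a \<omega> * real_cond_exp M G b \<omega>)"
    by (rule real_cond_exp_intg(2)[symmetric]) (use int am bm in auto)
  also have "\<dots> = integral\<^sup>L M (\<lambda>\<omega>. 0)"
  proof (rule integral_cong_AE)
    have [measurable]: "a \<in> borel_measurable M" using measurable_from_subalg[OF subalg am] .
    have [measurable]: "real_cond_exp M G b \<in> borel_measurable M"
      by (rule borel_measurable_cond_exp2)
    show "(\<lambda>\<omega>. a \<omega> * real_cond_exp M G b \<omega>) \<in> borel_measurable M" by measurable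
    show "(\<lambda>\<omega>. 0) \<in> borel_measurable M" by simp
    show "AE \<omega> in M. a \<omega> * real_cond_exp M G b \<omega> = 0" using ae by auto
  qed
  finally show ?thesis by simp
qed

definition L2 :: "'a measure \<Rightarrow> 'a measure \<Rightarrow> ('a \<Rightarrow> real^'n::finite) \<Rightarrow> bool" where
  "L2 M G f \<longleftrightarrow> f \<in> borel_measurable G \<and> integrable M (\<lambda>\<omega>. (norm (f \<omega>))\<^sup>2)"

lemma L2_M: "subalgebra M G \<Longrightarrow> L2 M G f \<Longrightarrow> f \<in> borel_measurable M"
  unfolding L2_def using measurable_from_subalg by blast

lemma L2_mono: "subalgebra M G' \<Longrightarrow> subalgebra M G \<Longrightarrow> sets G \<subseteq> sets G' \<Longrightarrow> L2 M G f \<Longrightarrow> L2 M G' f"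
  unfolding L2_def subalgebra_def using measurable_from_subalg[of G' G]
  by (auto simp: subalgebra_def)

lemma norm_add_sq_le: "(norm (a + b))\<^sup>2 \<le> 2 * (norm a)\<^sup>2 + 2 * (norm (b::'a::real_normed_vector))\<^sup>2"
proof -
  have "norm (a + b) \<le> norm a + norm b" by (rule norm_triangle_ineq)
  then have "(norm (a + b))\<^sup>2 \<le> (norm a + norm b)\<^sup>2" by (intro power_mono) auto
  also have "\<dots> \<le> 2 * (norm a)\<^sup>2 + 2 * (norm b)\<^sup>2"
    using sum_squares_bound[of "norm a" "norm b"] by (simp add: power2_eq_square algebra_simps)
  finally show ?thesis .
qed

lemma L2_add: "subalgebra M G \<Longrightarrow> L2 M G f \<Longrightarrow> L2 M G g \<Longrightarrow> L2 M G (\<lambda>\<omega>. f \<omega> + g \<omega>)"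
proof -
  assume sa: "subalgebra M G" and f: "L2 M G f" and g: "L2 M G g"
  have [measurable]: "f \<in> borel_measurable G" "g \<in> borel_measurable G" using f g by (auto simp: L2_def)
  have [measurable]: "f \<in> borel_measurable M" "g \<in> borel_measurable M" using f g sa L2_M by auto
  have "integrable M (\<lambda>\<omega>. (norm (f \<omega> + g \<omega>))\<^sup>2)"
  proof (rule Bochner_Integration.integrable_bound)
    show "integrable M (\<lambda>\<omega>. 2 * (norm (f \<omega>))\<^sup>2 + 2 * (norm (g \<omega>))\<^sup>2)"
      using f g by (auto simp: L2_def)
    show "(\<lambda>\<omega>. (norm (f \<omega> + g \<omega>))\<^sup>2) \<in> borel_measurable M" by measurable
    show "AE \<omega> in M. norm ((norm (f \<omega> + g \<omega>))\<^sup>2) \<le> norm (2 * (norm (f \<omega>))\<^sup>2 + 2 * (norm (g \<omega>))\<^sup>2)"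
      using norm_add_sq_le by auto
  qed
  moreover have "(\<lambda>\<omega>. f \<omega> + g \<omega>) \<in> borel_measurable G" by measurable
  ultimately show ?thesis unfolding L2_def by simp
qed

lemma L2_scaleR: "L2 M G f \<Longrightarrow> L2 M G (\<lambda>\<omega>. c *\<^sub>R f \<omega>)"
  unfolding L2_def by (auto simp: power_mult_distrib)

lemma L2_uminus: "L2 M G f \<Longrightarrow> L2 M G (\<lambda>\<omega>. - f \<omega>)"
  unfolding L2_def by auto

lemma L2_diff: "subalgebra M G \<Longrightarrow> L2 M G f \<Longrightarrow> L2 M G g \<Longrightarrow> L2 M G (\<lambda>\<omega>. f \<omega> - g \<omega>)"
  using L2_add[of M G f "\<lambda>\<omega>. - g \<omega>"] L2_uminus[of M G g] by simp

lemma L2_const: "prob_space M \<Longrightarrow> L2 M G (\<lambda>\<omega>. c)"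
  unfolding L2_def by (auto intro: finite_measure.integrable_const simp: prob_space_def)

lemma L2_lipschitz:
  assumes sa: "subalgebra M G" and pm: "prob_space M" and f: "L2 M G f"
    and lip: "\<And>x y. norm (h x - h y) \<le> L * norm (x - y)" and L0: "0 \<le> L"
  shows "L2 M G (\<lambda>\<omega>. (h (f \<omega>) :: real^'m::finite))"
proof -
  have "L-lipschitz_on UNIV h" by (rule lipschitz_onI) (use lip L0 in \<open>auto simp: dist_norm\<close>)
  then have ch: "continuous_on UNIV h" by (rule lipschitz_on_continuous_on)
  have [measurable]: "f \<in> borel_measurable G" "f \<in> borel_measurable M" using f sa L2_M by (auto simp: L2_def)
  have hG: "(\<lambda>\<omega>. h (f \<omega>)) \<in> borel_measurable G" by (rule borel_measurable_continuous_on[OF ch]) simp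
  have hM[measurable]: "(\<lambda>\<omega>. h (f \<omega>)) \<in> borel_measurable M" by (rule borel_measurable_continuous_on[OF ch]) simp
  have b: "norm (h x) \<le> norm (h 0) + L * norm x" for x
    using lip[of x 0] norm_triangle_ineq2[of "h x" "h 0"] by simp
  have "integrable M (\<lambda>\<omega>. (norm (h (f \<omega>)))\<^sup>2)"
  proof (rule Bochner_Integration.integrable_bound)
    show "integrable M (\<lambda>\<omega>. 2 * (norm (h 0))\<^sup>2 + 2 * (L\<^sup>2 * (norm (f \<omega>))\<^sup>2))"
      using f pm by (auto simp: L2_def prob_space_def intro!: finite_measure.integrable_const)
    show "(\<lambda>\<omega>. (norm (h (f \<omega>)))\<^sup>2) \<in> borel_measurable M" by measurable
    show "AE \<omega> in M. norm ((norm (h (f \<omega>)))\<^sup>2) \<le> norm (2 * (norm (h 0))\<^sup>2 + 2 * (L\<^sup>2 * (norm (f \<omega>))\<^sup>2))"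
    proof (intro AE_I2)
      fix \<omega>
      have "(norm (h (f \<omega>)))\<^sup>2 \<le> (norm (h 0) + L * norm (f \<omega>))\<^sup>2" using b[of "f \<omega>"] by (intro power_mono) auto
      also have "\<dots> \<le> 2 * (norm (h 0))\<^sup>2 + 2 * (L * norm (f \<omega>))\<^sup>2"
        using sum_squares_bound[of "norm (h 0)" "L * norm (f \<omega>)"] by (simp add: power2_eq_square algebra_simps)
      finally show "norm ((norm (h (f \<omega>)))\<^sup>2) \<le> norm (2 * (norm (h 0))\<^sup>2 + 2 * (L\<^sup>2 * (norm (f \<omega>))\<^sup>2))"
        by (simp add: power_mult_distrib)
    qed
  qed
  then show ?thesis unfolding L2_def using hG by auto
qed

lemma L2_matrix_vector_mult: "subalgebra M G \<Longrightarrow> prob_space M \<Longrightarrow> L2 M G f \<Longrightarrow> L2 M G (\<lambda>\<omega>. (A::real^'n::finite^'m::finite) *v f \<omega>)"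
proof -
  assume a: "subalgebra M G" "prob_space M" "L2 M G f"
  obtain K where K: "\<And>x. norm (A *v x) \<le> norm x * K" "K > 0"
    using bounded_linear.pos_bounded[OF matrix_vector_mul_bounded_linear[of A]] by blast
  show ?thesis
    by (rule L2_lipschitz[OF a, of "(*v) A" K]) (use K in \<open>auto simp: matrix_vector_mult_diff_distrib[symmetric] mult.commute\<close>)
qed

lemma L2_inner:
  assumes sa: "subalgebra M G" "subalgebra M G'" and f: "L2 M G f" and g: "L2 M G' g"
  shows "integrable M (\<lambda>\<omega>. f \<omega> \<bullet> g \<omega>)"
proof (rule Bochner_Integration.integrable_bound)
  have [measurable]: "f \<in> borel_measurable M" "g \<in> borel_measurable M" using f g sa L2_M by auto
  show "integrable M (\<lambda>\<omega>. (norm (f \<omega>))\<^sup>2 + (norm (g \<omega>))\<^sup>2)" using f g by (auto simp: L2_def)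
  show "(\<lambda>\<omega>. f \<omega> \<bullet> g \<omega>) \<in> borel_measurable M" by measurable
  show "AE \<omega> in M. norm (f \<omega> \<bullet> g \<omega>) \<le> norm ((norm (f \<omega>))\<^sup>2 + (norm (g \<omega>))\<^sup>2)"
  proof (intro AE_I2)
    fix \<omega>
    have "\<bar>f \<omega> \<bullet> g \<omega>\<bar> \<le> norm (f \<omega>) * norm (g \<omega>)" by (rule Cauchy_Schwarz_ineq2)
    also have "\<dots> \<le> (norm (f \<omega>))\<^sup>2 + (norm (g \<omega>))\<^sup>2"
      using sum_squares_bound[of "norm (f \<omega>)" "norm (g \<omega>)"] mult_nonneg_nonneg[OF norm_ge_zero norm_ge_zero, of "f \<omega>" "g \<omega>"]
      unfolding power2_eq_square by linarith
    finally show "norm (f \<omega> \<bullet> g \<omega>) \<le> norm ((norm (f \<omega>))\<^sup>2 + (norm (g \<omega>))\<^sup>2)" by simp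
  qed
qed

lemma L2_component_mult:
  assumes sa: "subalgebra M G" "subalgebra M G'" and f: "L2 M G f" and g: "L2 M G' g"
  shows "integrable M (\<lambda>\<omega>. f \<omega> $ i * g \<omega> $ i)"
proof (rule Bochner_Integration.integrable_bound)
  have [measurable]: "f \<in> borel_measurable M" "g \<in> borel_measurable M" using f g sa L2_M by auto
  show "integrable M (\<lambda>\<omega>. (norm (f \<omega>))\<^sup>2 + (norm (g \<omega>))\<^sup>2)" using f g by (auto simp: L2_def)
  have [measurable]: "(\<lambda>x. f x $ i) \<in> borel_measurable M" "(\<lambda>x. g x $ i) \<in> borel_measurable M"
    using measurable_compose[OF \<open>f \<in> borel_measurable M\<close> borel_measurable_nth]
      measurable_compose[OF \<open>g \<in> borel_measurable M\<close> borel_measurable_nth] by auto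
  show "(\<lambda>\<omega>. f \<omega> $ i * g \<omega> $ i) \<in> borel_measurable M" by measurable
  show "AE \<omega> in M. norm (f \<omega> $ i * g \<omega> $ i) \<le> norm ((norm (f \<omega>))\<^sup>2 + (norm (g \<omega>))\<^sup>2)"
  proof (intro AE_I2)
    fix \<omega>
    have "\<bar>f \<omega> $ i * g \<omega> $ i\<bar> \<le> norm (f \<omega>) * norm (g \<omega>)"
      unfolding abs_mult by (intro mult_mono component_le_norm_cart) auto
    also have "\<dots> \<le> (norm (f \<omega>))\<^sup>2 + (norm (g \<omega>))\<^sup>2"
      using sum_squares_bound[of "norm (f \<omega>)" "norm (g \<omega>)"] mult_nonneg_nonneg[OF norm_ge_zero norm_ge_zero, of "f \<omega>" "g \<omega>"]
      unfolding power2_eq_square by linarith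
    finally show "norm (f \<omega> $ i * g \<omega> $ i) \<le> norm ((norm (f \<omega>))\<^sup>2 + (norm (g \<omega>))\<^sup>2)" by simp
  qed
qed

lemma borel_measurable_blk:
  "f \<in> borel_measurable G \<Longrightarrow> (\<lambda>\<omega>. blk (f \<omega> :: real^('k::finite\<times>'m::finite)) k) \<in> borel_measurable G"
proof -
  have "1-lipschitz_on UNIV (\<lambda>x::real^('k\<times>'m). blk x k)"
    by (rule lipschitz_onI) (auto simp: dist_norm blk_diff[symmetric] norm_blk_le)
  then have "continuous_on UNIV (\<lambda>x::real^('k\<times>'m). blk x k)" by (rule lipschitz_on_continuous_on)
  then show "f \<in> borel_measurable G \<Longrightarrow> (\<lambda>\<omega>. blk (f \<omega>) k) \<in> borel_measurable G"
    by (rule borel_measurable_continuous_on)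
qed

lemma L2_blk:
  "subalgebra M G \<Longrightarrow> prob_space M \<Longrightarrow> L2 M G f \<Longrightarrow> L2 M G (\<lambda>\<omega>. blk (f \<omega> :: real^('k::finite\<times>'m::finite)) k)"
  by (rule L2_lipschitz[where L=1]) (auto simp: blk_diff[symmetric] norm_blk_le)

section \<open>The stochastic recursion\<close>

lemma affine_recursion_bound:
  fixes a :: "nat \<Rightarrow> real"
  assumes rec: "\<And>i. a (Suc i) \<le> rho * a i + b" and "0 \<le> rho" "rho < 1" "0 \<le> b"
  shows "a i \<le> rho ^ i * a 0 + b / (1 - rho)"
proof (induction i)
  case 0
  then show ?case using assms by simp
next
  case (Suc i)
  have "a (Suc i) \<le> rho * a i + b" by (rule rec)
  also have "\<dots> \<le> rho * (rho ^ i * a 0 + b / (1 - rho)) + b"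
    using Suc \<open>0 \<le> rho\<close> by (intro add_right_mono mult_left_mono) auto
  also have "\<dots> = rho ^ Suc i * a 0 + (rho * (b / (1 - rho)) + b)" by (simp add: algebra_simps)
  also have "rho * (b / (1 - rho)) + b = b / (1 - rho)" using \<open>rho < 1\<close> by (simp add: field_simps)
  finally show ?case .
qed

lemma limsup_le_of_affine_recursion:
  fixes a x :: "nat \<Rightarrow> real"
  assumes rec: "\<And>i. a (Suc i) \<le> rho * a i + b" and rho: "0 \<le> rho" "rho < 1" and "0 \<le> b"
    and x_le_a: "\<And>i. x i \<le> a i"
  shows "(\<exists>B. \<forall>i. ennreal (x i) \<le> ennreal B) \<and> limsup (\<lambda>i. ennreal (x i)) \<le> ennreal (b / (1 - rho))"
proof -
  define K where "K = b / (1 - rho)"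
  have x_le: "x i \<le> rho ^ i * a 0 + K" for i
    using x_le_a[of i] affine_recursion_bound[of a rho b i, OF rec rho \<open>0 \<le> b\<close>]
    unfolding K_def by linarith
  have "rho ^ i * a 0 \<le> \<bar>a 0\<bar>" for i
  proof -
    have "rho ^ i \<le> 1" using rho by (simp add: power_le_one)
    then have "rho ^ i * a 0 \<le> rho ^ i * \<bar>a 0\<bar>" using rho by (intro mult_left_mono) auto
    also have "\<dots> \<le> 1 * \<bar>a 0\<bar>" using \<open>rho ^ i \<le> 1\<close> by (intro mult_right_mono) auto
    finally show ?thesis by simp
  qed
  then have "x i \<le> \<bar>a 0\<bar> + K" for i using x_le[of i] by (meson add_right_mono order.trans)
  then have bounded: "\<forall>i. ennreal (x i) \<le> ennreal (\<bar>a 0\<bar> + K)" by (blast intro: ennreal_leI)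
  have "(\<lambda>i. rho ^ i * a 0 + K) \<longlonglongrightarrow> 0 * a 0 + K"
    by (intro tendsto_intros LIMSEQ_power_zero) (use rho in auto)
  then have lim: "(\<lambda>i. ennreal (rho ^ i * a 0 + K)) \<longlonglongrightarrow> ennreal K"
    by (intro tendsto_ennrealI) simp
  have "limsup (\<lambda>i. ennreal (x i)) \<le> limsup (\<lambda>i. ennreal (rho ^ i * a 0 + K))"
    by (intro Limsup_mono always_eventually allI ennreal_leI x_le)
  also have "\<dots> = ennreal K" by (rule lim_imp_Limsup[OF _ lim]) simp
  finally show ?thesis using bounded K_def by blast
qed

locale diffusion_recursion =
  fixes g :: "real^('k::finite \<times> 'm::finite) \<Rightarrow> real^('k \<times> 'm)"
    and N Ab :: "real^('k \<times> 'm)^('k \<times> 'm)"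
    and wstar q :: "real^('k \<times> 'm)"
    and c mu kap rho L betam :: real
    and beta sigma :: "'k \<Rightarrow> real"
    and M :: "'w measure" and F :: "nat \<Rightarrow> 'w measure"
    and w psi s :: "nat \<Rightarrow> 'w \<Rightarrow> real^('k \<times> 'm)"
  assumes N_self_adjoint: "mat_self_adjoint N"
    and N_nonneg: "\<And>v. 0 \<le> v \<bullet> (N *v v)"
    and N_coercive: "\<And>v. c * (v \<bullet> (N *v v)) \<le> (norm (N *v v))\<^sup>2"
    and c_pos: "c > 0"
    and N_eq_of_Ab: "\<And>x y. Ab *v x = y \<Longrightarrow> x = y + N *v y"
    and N_wstar: "N *v wstar = 0"
    and N_q: "N *v q = g wstar"
    and step_contraction:
      "\<And>x. (norm ((x - wstar) - mu *\<^sub>R (g x - g wstar)))\<^sup>2 \<le> kap * (norm (x - wstar))\<^sup>2"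
    and g_lipschitz: "\<And>x y. norm (g x - g y) \<le> L * norm (x - y)"
    and L_nonneg: "0 \<le> L"
    and beta_bound: "\<And>k. 0 \<le> beta k \<and> beta k \<le> betam"
    and mu_pos: "0 < mu"
    and rate: "kap + mu\<^sup>2 * betam\<^sup>2 \<le> rho" "1 \<le> rho * (1 + c)" "rho < 1"
    and prob_space_M: "prob_space M"
    and subalg: "\<forall>i. subalgebra M (F i)"
    and filtration: "\<forall>i. sets (F i) \<subseteq> sets (F (Suc i))"
    and w0_meas: "w 0 \<in> borel_measurable (F 0)"
    and w0_sq: "(\<integral>\<^sup>+ \<omega>. ennreal ((norm (w 0 \<omega>))\<^sup>2) \<partial>M) < \<infinity>"
    and s_meas: "\<forall>i\<ge>1. s i \<in> borel_measurable (F i)"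
    and psi0: "\<forall>\<omega>. psi 0 \<omega> = w 0 \<omega>"
    and psi_rec: "\<forall>i\<ge>1. \<forall>\<omega>. psi i \<omega> = w (i - 1) \<omega> - mu *\<^sub>R (g (w (i - 1) \<omega>) + s i \<omega>)"
    and w_rec: "\<forall>i\<ge>1. \<forall>\<omega>. w i \<omega> = Ab *v (w (i - 1) \<omega> + psi i \<omega> - psi (i - 1) \<omega>)"
    and noise_mean:
      "\<forall>i\<ge>1. \<forall>k j. AE \<omega> in M. real_cond_exp M (F (i - 1)) (\<lambda>\<omega>. s i \<omega> $ (k, j)) \<omega> = 0"
    and noise_var: "\<forall>i\<ge>1. \<forall>k. AE \<omega> in M.
          nn_cond_exp M (F (i - 1)) (\<lambda>\<omega>. ennreal ((norm (blk (s i \<omega>) k))\<^sup>2)) \<omega>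
            \<le> ennreal ((beta k)\<^sup>2 * (norm (blk wstar k - blk (w (i - 1) \<omega>) k))\<^sup>2 + (sigma k)\<^sup>2)"
begin

definition wsum :: "nat \<Rightarrow> 'w \<Rightarrow> real^('k \<times> 'm)" where
  "wsum i \<omega> = (\<Sum>j\<in>{1..i}. w j \<omega>)"

definition err :: "nat \<Rightarrow> 'w \<Rightarrow> real^('k \<times> 'm)" where
  "err i \<omega> = w i \<omega> - wstar"

definition dual_err :: "nat \<Rightarrow> 'w \<Rightarrow> real^('k \<times> 'm)" where
  "dual_err i \<omega> = wsum i \<omega> - real i *\<^sub>R wstar + mu *\<^sub>R q"

definition step_err :: "nat \<Rightarrow> 'w \<Rightarrow> real^('k \<times> 'm)" where
  "step_err i \<omega> = err i \<omega> - mu *\<^sub>R (g (w i \<omega>) - g wstar)"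

definition lyap :: "nat \<Rightarrow> 'w \<Rightarrow> real" where
  "lyap i \<omega> = (norm (err i \<omega>))\<^sup>2 + err i \<omega> \<bullet> (N *v err i \<omega>) + (1 + c) * (dual_err i \<omega> \<bullet> (N *v dual_err i \<omega>))"

definition noise_floor :: real where
  "noise_floor = (\<Sum>k\<in>UNIV. (sigma k)\<^sup>2)"

lemma psi_Suc: "psi (Suc i) \<omega> = w i \<omega> - mu *\<^sub>R (g (w i \<omega>) + s (Suc i) \<omega>)"
  using psi_rec by simp

lemma w_Suc: "w (Suc i) \<omega> = Ab *v (w i \<omega> + psi (Suc i) \<omega> - psi i \<omega>)"
  using w_rec by simp

text \<open>Telescoping the combination step: the exact-diffusion correction \<open>\<psi>\<^sub>i - \<psi>\<^sub>i\<^sub>-\<^sub>1\<close>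
  accumulates into \<open>N\<close> applied to the running sum of the iterates.\<close>
lemma w_Suc_eq_psi_minus_N_wsum: "w (Suc i) \<omega> = psi (Suc i) \<omega> - N *v wsum (Suc i) \<omega>"
proof (induction i)
  case 0
  have "Ab *v psi 1 \<omega> = w 1 \<omega>" using w_Suc[of 0] psi0 by simp
  then have "psi 1 \<omega> = w 1 \<omega> + N *v w 1 \<omega>" by (rule N_eq_of_Ab)
  then show ?case by (simp add: wsum_def)
next
  case (Suc i)
  have "w (Suc i) \<omega> + psi (Suc (Suc i)) \<omega> - psi (Suc i) \<omega>
      = w (Suc (Suc i)) \<omega> + N *v w (Suc (Suc i)) \<omega>"
    using N_eq_of_Ab[OF w_Suc[symmetric]] .
  moreover have "wsum (Suc (Suc i)) \<omega> = wsum (Suc i) \<omega> + w (Suc (Suc i)) \<omega>"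
    by (simp add: wsum_def)
  ultimately show ?case using Suc.IH by (simp add: algebra_simps)
qed

lemma dual_err_Suc: "dual_err (Suc i) \<omega> = dual_err i \<omega> + err (Suc i) \<omega>"
  by (simp add: dual_err_def err_def wsum_def algebra_simps)

lemma error_recursion: "err (Suc i) \<omega> + N *v dual_err (Suc i) \<omega> = step_err i \<omega> - mu *\<^sub>R s (Suc i) \<omega>"
proof -
  have "N *v dual_err (Suc i) \<omega> = N *v wsum (Suc i) \<omega> + mu *\<^sub>R g wstar"
    by (simp add: dual_err_def matrix_vector_right_distrib matrix_vector_mult_diff_distrib
        matrix_vector_mult_scaleR N_wstar N_q)
  then show ?thesis
    using w_Suc_eq_psi_minus_N_wsum[of i \<omega>] psi_Suc[of i \<omega>]
    by (simp add: err_def step_err_def algebra_simps)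
qed

text \<open>With \<open>e = err (Suc i)\<close>, \<open>u = dual_err i\<close>, \<open>u' = u + e\<close> and \<open>d = step_err i\<close>, squaring
  \<open>error_recursion\<close> gives \<open>\<parallel>e\<parallel>\<^sup>2 + e\<bullet>Ne + u'\<bullet>Nu' + \<parallel>Nu'\<parallel>\<^sup>2 = \<parallel>d - \<mu> s\<parallel>\<^sup>2 + u\<bullet>Nu\<close>;
  coercivity then trades \<open>\<parallel>Nu'\<parallel>\<^sup>2\<close> for \<open>c u'\<bullet>Nu'\<close>.\<close>
lemma lyap_Suc_le:
  "lyap (Suc i) \<omega> \<le> kap * (norm (err i \<omega>))\<^sup>2 + dual_err i \<omega> \<bullet> (N *v dual_err i \<omega>)
     - 2 * mu * (step_err i \<omega> \<bullet> s (Suc i) \<omega>) + mu\<^sup>2 * (norm (s (Suc i) \<omega>))\<^sup>2"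
proof -
  define e u u' d where "e = err (Suc i) \<omega>" and "u = dual_err i \<omega>" and "u' = dual_err (Suc i) \<omega>"
    and "d = step_err i \<omega>"
  have e_plus: "e + N *v u' = d - mu *\<^sub>R s (Suc i) \<omega>" unfolding e_def u'_def d_def by (rule error_recursion)
  have u': "u' = u + e" unfolding u'_def u_def e_def by (rule dual_err_Suc)
  have sym: "e \<bullet> (N *v u) = u \<bullet> (N *v e)"
    using N_self_adjoint unfolding mat_self_adjoint_def by (metis inner_commute)
  have "(norm e)\<^sup>2 + e \<bullet> (N *v e) + u' \<bullet> (N *v u') + (norm (N *v u'))\<^sup>2
      = (norm (d - mu *\<^sub>R s (Suc i) \<omega>))\<^sup>2 + u \<bullet> (N *v u)"
    unfolding e_plus[symmetric] u' using sym
    by (simp add: power2_norm_eq_inner inner_add_left inner_add_right matrix_vector_right_distrib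
        inner_commute)
  moreover have "(norm (d - mu *\<^sub>R s (Suc i) \<omega>))\<^sup>2
      = (norm d)\<^sup>2 - 2 * mu * (d \<bullet> s (Suc i) \<omega>) + mu\<^sup>2 * (norm (s (Suc i) \<omega>))\<^sup>2"
    by (simp add: norm_diff_sq power_mult_distrib)
  moreover have "(norm d)\<^sup>2 \<le> kap * (norm (err i \<omega>))\<^sup>2"
    using step_contraction[of "w i \<omega>"] by (simp add: d_def step_err_def err_def)
  ultimately show ?thesis
    using N_coercive[of u'] unfolding lyap_def e_def[symmetric] u'_def[symmetric] u_def[symmetric] d_def[symmetric]
    by (simp add: algebra_simps)
qed

sublocale prob_space M by (fact prob_space_M)

lemma subalgebra_F: "subalgebra M (F i)"
  using subalg by blast

lemma L2_F_mono: "L2 M (F i) f \<Longrightarrow> i \<le> j \<Longrightarrow> L2 M (F j) f"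
  using L2_mono[OF subalgebra_F subalgebra_F lift_Suc_mono_le[of "\<lambda>i. sets (F i)"]] filtration
  by blast

lemma L2_constant: "L2 M G (\<lambda>\<omega>. v)"
  by (rule L2_const[OF prob_space_M])

lemma L2_err: "L2 M (F i) (w i) \<Longrightarrow> L2 M (F i) (err i)"
  unfolding err_def[abs_def] by (intro L2_diff[OF subalgebra_F] L2_constant)

lemma noise_blk_moment:
  assumes "L2 M (F i) (w i)"
  shows "integrable M (\<lambda>\<omega>. (norm (blk (s (Suc i) \<omega>) k))\<^sup>2)"
    and "(\<integral>\<omega>. (norm (blk (s (Suc i) \<omega>) k))\<^sup>2 \<partial>M)
      \<le> (\<integral>\<omega>. (beta k)\<^sup>2 * (norm (blk (err i \<omega>) k))\<^sup>2 + (sigma k)\<^sup>2 \<partial>M)"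
proof -
  have "s (Suc i) \<in> borel_measurable (F (Suc i))" using s_meas by auto
  then have "s (Suc i) \<in> borel_measurable M" by (rule measurable_from_subalg[OF subalgebra_F])
  then have "(\<lambda>\<omega>. blk (s (Suc i) \<omega>) k) \<in> borel_measurable M" by (rule borel_measurable_blk)
  then have meas: "(\<lambda>\<omega>. (norm (blk (s (Suc i) \<omega>) k))\<^sup>2) \<in> borel_measurable M" by measurable
  have "L2 M (F i) (\<lambda>\<omega>. blk (err i \<omega>) k)"
    by (rule L2_blk[OF subalgebra_F prob_space_M L2_err[OF assms]])
  then have int: "integrable M (\<lambda>\<omega>. (beta k)\<^sup>2 * (norm (blk (err i \<omega>) k))\<^sup>2 + (sigma k)\<^sup>2)"
    by (auto simp: L2_def)
  have "norm (blk wstar k - blk (w i \<omega>) k) = norm (blk (err i \<omega>) k)" for \<omega>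
    by (simp add: err_def blk_diff norm_minus_commute)
  then have "AE \<omega> in M. nn_cond_exp M (F i) (\<lambda>\<omega>. ennreal ((norm (blk (s (Suc i) \<omega>) k))\<^sup>2)) \<omega>
      \<le> ennreal ((beta k)\<^sup>2 * (norm (blk (err i \<omega>) k))\<^sup>2 + (sigma k)\<^sup>2)"
    using noise_var[rule_format, of "Suc i" k] by (simp only: diff_Suc_1)
  from integral_le_of_nn_cond_exp_le[OF prob_space_sigma_finite_subalgebra[OF prob_space_M subalgebra_F]
      meas _ this int]
  show "integrable M (\<lambda>\<omega>. (norm (blk (s (Suc i) \<omega>) k))\<^sup>2)"
    and "(\<integral>\<omega>. (norm (blk (s (Suc i) \<omega>) k))\<^sup>2 \<partial>M)
      \<le> (\<integral>\<omega>. (beta k)\<^sup>2 * (norm (blk (err i \<omega>) k))\<^sup>2 + (sigma k)\<^sup>2 \<partial>M)"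
    by auto
qed

lemma noise_second_moment:
  assumes "L2 M (F i) (w i)"
  shows "L2 M (F (Suc i)) (s (Suc i))"
    and "(\<integral>\<omega>. (norm (s (Suc i) \<omega>))\<^sup>2 \<partial>M) \<le> betam\<^sup>2 * (\<integral>\<omega>. (norm (err i \<omega>))\<^sup>2 \<partial>M) + noise_floor"
proof -
  note blk_moment = noise_blk_moment[OF assms]
  have err_sq: "integrable M (\<lambda>\<omega>. (norm (err i \<omega>))\<^sup>2)" using L2_err[OF assms] by (simp add: L2_def)
  have blk_bound: "integrable M (\<lambda>\<omega>. (beta k)\<^sup>2 * (norm (blk (err i \<omega>) k))\<^sup>2 + (sigma k)\<^sup>2)" for k
    using L2_blk[OF subalgebra_F prob_space_M L2_err[OF assms], of k] by (auto simp: L2_def)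
  show "L2 M (F (Suc i)) (s (Suc i))"
    using s_meas blk_moment(1) by (auto simp: L2_def norm_sq_eq_sum_blk[of "s (Suc i) _"])
  have "(\<integral>\<omega>. (norm (s (Suc i) \<omega>))\<^sup>2 \<partial>M) = (\<Sum>k\<in>UNIV. \<integral>\<omega>. (norm (blk (s (Suc i) \<omega>) k))\<^sup>2 \<partial>M)"
    using blk_moment(1) by (simp add: norm_sq_eq_sum_blk[of "s (Suc i) _"])
  also have "\<dots> \<le> (\<Sum>k\<in>UNIV. \<integral>\<omega>. (beta k)\<^sup>2 * (norm (blk (err i \<omega>) k))\<^sup>2 + (sigma k)\<^sup>2 \<partial>M)"
    by (intro sum_mono blk_moment(2))
  also have "\<dots> = (\<integral>\<omega>. (\<Sum>k\<in>UNIV. (beta k)\<^sup>2 * (norm (blk (err i \<omega>) k))\<^sup>2 + (sigma k)\<^sup>2) \<partial>M)"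
    using blk_bound by (intro Bochner_Integration.integral_sum[symmetric]) auto
  also have "\<dots> = (\<integral>\<omega>. (\<Sum>k\<in>UNIV. (beta k)\<^sup>2 * (norm (blk (err i \<omega>) k))\<^sup>2) + noise_floor \<partial>M)"
    by (simp add: noise_floor_def sum.distrib)
  also have "\<dots> \<le> (\<integral>\<omega>. betam\<^sup>2 * (norm (err i \<omega>))\<^sup>2 + noise_floor \<partial>M)"
  proof (rule integral_mono)
    fix \<omega>
    have "(\<Sum>k\<in>UNIV. (beta k)\<^sup>2 * (norm (blk (err i \<omega>) k))\<^sup>2)
        \<le> (\<Sum>k\<in>UNIV. betam\<^sup>2 * (norm (blk (err i \<omega>) k))\<^sup>2)"
      using beta_bound by (intro sum_mono mult_right_mono power_mono) auto
    then show "(\<Sum>k\<in>UNIV. (beta k)\<^sup>2 * (norm (blk (err i \<omega>) k))\<^sup>2) + noise_floor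
        \<le> betam\<^sup>2 * (norm (err i \<omega>))\<^sup>2 + noise_floor"
      by (simp add: norm_sq_eq_sum_blk[of "err i \<omega>"] sum_distrib_left)
  qed (use blk_bound err_sq in \<open>auto simp: noise_floor_def sum.distrib[symmetric]\<close>)
  also have "\<dots> = betam\<^sup>2 * (\<integral>\<omega>. (norm (err i \<omega>))\<^sup>2 \<partial>M) + noise_floor"
    using err_sq prob_space by simp
  finally show "(\<integral>\<omega>. (norm (s (Suc i) \<omega>))\<^sup>2 \<partial>M) \<le> betam\<^sup>2 * (\<integral>\<omega>. (norm (err i \<omega>))\<^sup>2 \<partial>M) + noise_floor" .
qed

lemma iterates_L2: "L2 M (F i) (w i) \<and> L2 M (F i) (psi i) \<and> L2 M (F i) (wsum i)"
proof (induction i)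
  case 0
  have "w 0 \<in> borel_measurable M" by (rule measurable_from_subalg[OF subalgebra_F w0_meas])
  then have "integrable M (\<lambda>\<omega>. (norm (w 0 \<omega>))\<^sup>2)"
    by (intro integrableI_bounded) (use w0_sq in auto)
  moreover have "psi 0 = w 0" "wsum 0 = (\<lambda>\<omega>. 0)" using psi0 by (auto simp: wsum_def)
  ultimately show ?case using w0_meas L2_constant by (simp add: L2_def)
next
  case (Suc i)
  have up: "L2 M (F (Suc i)) f" if "L2 M (F i) f" for f :: "'w \<Rightarrow> real^('k \<times> 'm)"
    using L2_F_mono[OF that] by simp
  have w: "L2 M (F (Suc i)) (w i)" and psi: "L2 M (F (Suc i)) (psi i)"
    and wsum: "L2 M (F (Suc i)) (wsum i)" using Suc.IH up by auto
  have "L2 M (F (Suc i)) (\<lambda>\<omega>. g (w i \<omega>))"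
    by (rule L2_lipschitz[OF subalgebra_F prob_space_M w g_lipschitz L_nonneg])
  then have psi_Suc': "L2 M (F (Suc i)) (psi (Suc i))"
    unfolding psi_Suc[abs_def]
    using noise_second_moment(1) Suc.IH w by (intro L2_diff[OF subalgebra_F] L2_scaleR L2_add[OF subalgebra_F]) auto
  have w_Suc': "L2 M (F (Suc i)) (w (Suc i))"
    unfolding w_Suc[abs_def] using w psi psi_Suc'
    by (intro L2_matrix_vector_mult[OF subalgebra_F prob_space_M] L2_diff[OF subalgebra_F] L2_add[OF subalgebra_F])
  have "wsum (Suc i) = (\<lambda>\<omega>. wsum i \<omega> + w (Suc i) \<omega>)" by (simp add: wsum_def fun_eq_iff)
  then show ?case using psi_Suc' w_Suc' wsum L2_add[OF subalgebra_F] by simp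
qed

lemma L2_dual_err: "L2 M (F i) (dual_err i)"
  unfolding dual_err_def[abs_def] using iterates_L2
  by (intro L2_add[OF subalgebra_F] L2_diff[OF subalgebra_F] L2_constant) auto

lemma L2_step_err: "L2 M (F i) (step_err i)"
  unfolding step_err_def[abs_def] using iterates_L2 L2_err
  by (intro L2_diff[OF subalgebra_F] L2_scaleR L2_lipschitz[OF subalgebra_F prob_space_M _ g_lipschitz L_nonneg]
      L2_constant) auto

text \<open>The noise is a martingale difference, so it is uncorrelated with anything
  \<open>F i\<close>-measurable, in particular with the deterministic part of the error.\<close>
lemma cross_term_zero: "(\<integral>\<omega>. step_err i \<omega> \<bullet> s (Suc i) \<omega> \<partial>M) = 0"
proof -
  have d: "L2 M (F i) (step_err i)" and s: "L2 M (F (Suc i)) (s (Suc i))"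
    using L2_step_err noise_second_moment(1) iterates_L2 by auto
  have "(\<integral>\<omega>. step_err i \<omega> \<bullet> s (Suc i) \<omega> \<partial>M)
      = (\<Sum>x\<in>UNIV. \<integral>\<omega>. step_err i \<omega> $ x * s (Suc i) \<omega> $ x \<partial>M)"
    unfolding inner_vec_def inner_real_def
    by (intro Bochner_Integration.integral_sum L2_component_mult[OF subalgebra_F subalgebra_F d s])
  also have "\<dots> = 0"
  proof (intro sum.neutral ballI)
    fix x :: "'k \<times> 'm"
    obtain k j where x: "x = (k, j)" by (cases x)
    have "step_err i \<in> borel_measurable (F i)" using d by (simp add: L2_def)
    moreover have "s (Suc i) \<in> borel_measurable M" using L2_M[OF subalgebra_F s] .
    ultimately show "(\<integral>\<omega>. step_err i \<omega> $ x * s (Suc i) \<omega> $ x \<partial>M) = 0"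
      using noise_mean[rule_format, of "Suc i" k j] x
      by (intro integral_mult_cond_exp_zero[OF prob_space_sigma_finite_subalgebra[OF prob_space_M subalgebra_F]]
          measurable_compose[OF _ borel_measurable_nth] L2_component_mult[OF subalgebra_F subalgebra_F d s]) auto
  qed
  finally show ?thesis .
qed

lemma rho_pos: "0 < rho"
proof (rule ccontr)
  assume "\<not> 0 < rho"
  then have "rho * (1 + c) \<le> 0" using c_pos by (simp add: mult_nonpos_nonneg)
  then show False using rate(2) by simp
qed

lemma integrable_lyap_terms:
  "integrable M (\<lambda>\<omega>. (norm (err i \<omega>))\<^sup>2)" "integrable M (\<lambda>\<omega>. err i \<omega> \<bullet> (N *v err i \<omega>))"
  "integrable M (\<lambda>\<omega>. dual_err i \<omega> \<bullet> (N *v dual_err i \<omega>))" "integrable M (lyap i)"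
proof -
  have quad: "integrable M (\<lambda>\<omega>. f \<omega> \<bullet> (N *v f \<omega>))" if "L2 M (F i) f" for f
    using that by (intro L2_inner[OF subalgebra_F subalgebra_F] L2_matrix_vector_mult[OF subalgebra_F prob_space_M])
  have "L2 M (F i) (err i)" using L2_err iterates_L2 by blast
  then show "integrable M (\<lambda>\<omega>. (norm (err i \<omega>))\<^sup>2)" "integrable M (\<lambda>\<omega>. err i \<omega> \<bullet> (N *v err i \<omega>))"
    and dual: "integrable M (\<lambda>\<omega>. dual_err i \<omega> \<bullet> (N *v dual_err i \<omega>))"
    using quad L2_dual_err by (auto simp: L2_def)
  then show "integrable M (lyap i)" unfolding lyap_def[abs_def] by auto
qed

lemma expected_lyap_Suc_le:
  "(\<integral>\<omega>. lyap (Suc i) \<omega> \<partial>M) \<le> rho * (\<integral>\<omega>. lyap i \<omega> \<partial>M) + mu\<^sup>2 * noise_floor"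
proof -
  note int = integrable_lyap_terms
  have wi: "L2 M (F i) (w i)" using iterates_L2 by blast
  have s: "L2 M (F (Suc i)) (s (Suc i))" by (rule noise_second_moment(1)[OF wi])
  have int_s: "integrable M (\<lambda>\<omega>. (norm (s (Suc i) \<omega>))\<^sup>2)" using s by (simp add: L2_def)
  have int_cross: "integrable M (\<lambda>\<omega>. step_err i \<omega> \<bullet> s (Suc i) \<omega>)"
    by (rule L2_inner[OF subalgebra_F subalgebra_F L2_step_err s])
  define Ee EN EQ where "Ee = (\<integral>\<omega>. (norm (err i \<omega>))\<^sup>2 \<partial>M)"
    and "EN = (\<integral>\<omega>. err i \<omega> \<bullet> (N *v err i \<omega>) \<partial>M)"
    and "EQ = (\<integral>\<omega>. dual_err i \<omega> \<bullet> (N *v dual_err i \<omega>) \<partial>M)"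
  have Ee0: "0 \<le> Ee" and EN0: "0 \<le> EN" and EQ0: "0 \<le> EQ"
    unfolding Ee_def EN_def EQ_def using N_nonneg by simp_all
  have lyap_i: "(\<integral>\<omega>. lyap i \<omega> \<partial>M) = Ee + EN + (1 + c) * EQ"
    unfolding lyap_def Ee_def EN_def EQ_def using int by simp
  have "(\<integral>\<omega>. lyap (Suc i) \<omega> \<partial>M)
      \<le> (\<integral>\<omega>. kap * (norm (err i \<omega>))\<^sup>2 + dual_err i \<omega> \<bullet> (N *v dual_err i \<omega>)
          - 2 * mu * (step_err i \<omega> \<bullet> s (Suc i) \<omega>) + mu\<^sup>2 * (norm (s (Suc i) \<omega>))\<^sup>2 \<partial>M)"
    using int int_s int_cross by (intro integral_mono[OF int(4) _ lyap_Suc_le]) auto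
  also have "\<dots> = kap * Ee + EQ - 2 * mu * (\<integral>\<omega>. step_err i \<omega> \<bullet> s (Suc i) \<omega> \<partial>M)
      + mu\<^sup>2 * (\<integral>\<omega>. (norm (s (Suc i) \<omega>))\<^sup>2 \<partial>M)"
    unfolding Ee_def EQ_def using int int_s int_cross by simp
  also have "\<dots> \<le> kap * Ee + EQ + mu\<^sup>2 * (betam\<^sup>2 * Ee + noise_floor)"
    using mult_left_mono[OF noise_second_moment(2)[OF wi], of "mu\<^sup>2"] cross_term_zero[of i]
    unfolding Ee_def by simp
  also have "\<dots> = (kap + mu\<^sup>2 * betam\<^sup>2) * Ee + 1 * EQ + mu\<^sup>2 * noise_floor"
    by (simp add: algebra_simps)
  also have "\<dots> \<le> rho * Ee + (rho * (1 + c)) * EQ + mu\<^sup>2 * noise_floor"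
    using rate Ee0 EQ0 by (intro add_mono[OF add_mono order.refl] mult_right_mono) auto
  also have "\<dots> \<le> rho * (\<integral>\<omega>. lyap i \<omega> \<partial>M) + mu\<^sup>2 * noise_floor"
    using mult_nonneg_nonneg[OF less_imp_le[OF rho_pos] EN0] unfolding lyap_i
    by (simp add: algebra_simps)
  finally show ?thesis .
qed

lemma mean_square_bound:
  "(\<exists>B. \<forall>i. (\<integral>\<^sup>+ \<omega>. ennreal ((norm (wstar - w i \<omega>))\<^sup>2) \<partial>M) \<le> ennreal B) \<and>
   limsup (\<lambda>i. \<integral>\<^sup>+ \<omega>. ennreal ((norm (wstar - w i \<omega>))\<^sup>2) \<partial>M) \<le> ennreal (mu\<^sup>2 * noise_floor / (1 - rho))"
proof -
  have err_le_lyap: "(\<integral>\<omega>. (norm (err i \<omega>))\<^sup>2 \<partial>M) \<le> (\<integral>\<omega>. lyap i \<omega> \<partial>M)" for i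
    using N_nonneg c_pos
    by (intro integral_mono integrable_lyap_terms) (simp add: lyap_def)
  have "(\<integral>\<^sup>+ \<omega>. ennreal ((norm (wstar - w i \<omega>))\<^sup>2) \<partial>M) = ennreal (\<integral>\<omega>. (norm (err i \<omega>))\<^sup>2 \<partial>M)" for i
    using integrable_lyap_terms(1) by (simp add: err_def norm_minus_commute nn_integral_eq_integral)
  moreover have "0 \<le> mu\<^sup>2 * noise_floor" unfolding noise_floor_def by (intro mult_nonneg_nonneg sum_nonneg) auto
  ultimately show ?thesis
    using limsup_le_of_affine_recursion[where a="\<lambda>i. \<integral>\<omega>. lyap i \<omega> \<partial>M",
        OF expected_lyap_Suc_le less_imp_le[OF rho_pos] rate(3) _ err_le_lyap]
    by simp
qed

end

lemma step_size_rate: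
  fixes nu0 delta0 betam c :: real
  assumes "0 < nu0" "0 < c"
  shows "\<exists>mubar>0. \<forall>mu. 0 < mu \<and> mu < mubar \<longrightarrow>
    (1 - 2 * mu * nu0 + mu\<^sup>2 * delta0\<^sup>2) + mu\<^sup>2 * betam\<^sup>2 \<le> 1 - mu * nu0 \<and> 1 \<le> (1 - mu * nu0) * (1 + c)"
proof (intro exI[of _ "min (nu0 / (delta0\<^sup>2 + betam\<^sup>2 + 1)) (c / ((1 + c) * nu0))"] conjI allI impI)
  have D: "0 < delta0\<^sup>2 + betam\<^sup>2 + 1" by (simp add: add_nonneg_pos)
  show "0 < min (nu0 / (delta0\<^sup>2 + betam\<^sup>2 + 1)) (c / ((1 + c) * nu0))"
    using assms D by simp
  fix mu assume mu: "0 < mu \<and> mu < min (nu0 / (delta0\<^sup>2 + betam\<^sup>2 + 1)) (c / ((1 + c) * nu0))"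
  then have "mu * (delta0\<^sup>2 + betam\<^sup>2 + 1) < nu0" using D by (simp add: pos_less_divide_eq)
  then have "mu * (mu * (delta0\<^sup>2 + betam\<^sup>2)) \<le> mu * nu0"
    using mu by (intro mult_left_mono) (auto simp: algebra_simps)
  then show "(1 - 2 * mu * nu0 + mu\<^sup>2 * delta0\<^sup>2) + mu\<^sup>2 * betam\<^sup>2 \<le> 1 - mu * nu0"
    by (simp add: power2_eq_square algebra_simps)
  have "mu * ((1 + c) * nu0) < c" using mu assms by (simp add: pos_less_divide_eq)
  then show "1 \<le> (1 - mu * nu0) * (1 + c)" by (simp add: algebra_simps)
qed

theorem mainTheorem1:
  fixes J :: "'k::finite \<Rightarrow> real^'m::finite \<Rightarrow> real"
    and gradJ :: "'k \<Rightarrow> real^'m \<Rightarrow> real^'m"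
    and nu delta beta sigma :: "'k \<Rightarrow> real"
    and U :: "real^'p::finite^('k \<times> 'm)"
    and A :: "real^('k \<times> 'm)^('k \<times> 'm)"
    and wstar :: "real^('k \<times> 'm)"
  assumes grad: "\<And>k x. (J k has_derivative (\<lambda>h. gradJ k x \<bullet> h)) (at x)"
    and A1_const: "\<And>k. 0 < nu k \<and> nu k < delta k"
    and A1_strong: "\<And>k x y. (gradJ k x - gradJ k y) \<bullet> (x - y) \<ge> nu k * (norm (x - y))\<^sup>2"
    and A1_lip: "\<And>k x y. norm (gradJ k x - gradJ k y) \<le> delta k * norm (x - y)"
    and A2_const: "\<And>k. beta k \<ge> 0 \<and> sigma k \<ge> 0"
    and U_rank: "rank U = CARD('p)"
    and wstar_in: "wstar \<in> range (\<lambda>x. U *v x)"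
    and wstar_min: "\<And>w. w \<in> range (\<lambda>x. U *v x) \<Longrightarrow>
                      (\<Sum>k\<in>UNIV. J k (blk wstar k)) \<le> (\<Sum>k\<in>UNIV. J k (blk w k))"
    and A_sym: "transpose A = A"
    and A_P: "A ** proj_range U = proj_range U"
    and P_A: "proj_range U ** A = proj_range U"
    and A_rho: "spec_radius (proj_range U - A) < 1"
  shows "\<exists>mubar>0. \<exists>C::real. \<forall>mu. 0 < mu \<and> mu < mubar \<longrightarrow>
    (\<forall>(M :: 'w measure) (F :: nat \<Rightarrow> 'w measure)
       (w :: nat \<Rightarrow> 'w \<Rightarrow> real^('k \<times> 'm)) (psi :: nat \<Rightarrow> 'w \<Rightarrow> real^('k \<times> 'm))
       (s :: nat \<Rightarrow> 'w \<Rightarrow> real^('k \<times> 'm)).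
      prob_space M \<and>
      (\<forall>i. subalgebra M (F i)) \<and>
      (\<forall>i. sets (F i) \<subseteq> sets (F (Suc i))) \<and>
      w 0 \<in> borel_measurable (F 0) \<and>
      (\<integral>\<^sup>+ \<omega>. ennreal ((norm (w 0 \<omega>))\<^sup>2) \<partial>M) < \<infinity> \<and>
      (\<forall>i\<ge>1. s i \<in> borel_measurable (F i)) \<and>
      (\<forall>\<omega>. psi 0 \<omega> = w 0 \<omega>) \<and>
      (\<forall>i\<ge>1. \<forall>\<omega>. psi i \<omega> = w (i - 1) \<omega> - mu *\<^sub>R (netgrad gradJ (w (i - 1) \<omega>) + s i \<omega>)) \<and>
      (\<forall>i\<ge>1. \<forall>\<omega>. w i \<omega> = ((1/2) *\<^sub>R (mat 1 + A)) *v (w (i - 1) \<omega> + psi i \<omega> - psi (i - 1) \<omega>)) \<and>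
      (\<forall>i\<ge>1. \<forall>k j. AE \<omega> in M. real_cond_exp M (F (i - 1)) (\<lambda>\<omega>. s i \<omega> $ (k, j)) \<omega> = 0) \<and>
      (\<forall>i\<ge>1. \<forall>k. AE \<omega> in M.
          nn_cond_exp M (F (i - 1)) (\<lambda>\<omega>. ennreal ((norm (blk (s i \<omega>) k))\<^sup>2)) \<omega>
            \<le> ennreal ((beta k)\<^sup>2 * (norm (blk wstar k - blk (w (i - 1) \<omega>) k))\<^sup>2 + (sigma k)\<^sup>2)) \<and>
      (\<forall>i\<ge>1. \<forall>k l j j'. k \<noteq> l \<longrightarrow> (AE \<omega> in M.
          real_cond_exp M (F (i - 1)) (\<lambda>\<omega>. s i \<omega> $ (k, j) * s i \<omega> $ (l, j')) \<omega> = 0))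
      \<longrightarrow>
      (\<exists>B::real. \<forall>i. (\<integral>\<^sup>+ \<omega>. ennreal ((norm (wstar - w i \<omega>))\<^sup>2) \<partial>M) \<le> ennreal B) \<and>
      limsup (\<lambda>i. \<integral>\<^sup>+ \<omega>. ennreal ((norm (wstar - w i \<omega>))\<^sup>2) \<partial>M) \<le> ennreal (C * mu))"
proof -
  define r where "r = spec_radius (proj_range U - A)"
  interpret combination_matrix A "proj_range U" r
    unfolding r_def by (rule combination_matrix_proj_range[OF U_rank A_sym A_P P_A A_rho])
  obtain q where q: "N *v q = netgrad gradJ wstar"
    using N_onto_complement proj_range_orthogonal[OF U_rank]
      constrained_minimizer_gradient_orthogonal[OF grad wstar_in wstar_min] by metis
  have N_wstar: "N *v wstar = 0" using wstar_in proj_range_fixes_range[OF U_rank] N_range_zero by auto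
  define nu0 delta0 betam where "nu0 = Min (range nu)" and "delta0 = Max (range delta)"
    and "betam = Max (range beta)"
  have nu0: "0 < nu0" "nu0 \<le> nu k" for k
    using Min_in[of "range nu"] A1_const unfolding nu0_def by auto
  have delta0: "delta k \<le> delta0" "0 \<le> delta0" for k
    using A1_const[of k] Max_ge[of "range delta"] unfolding delta0_def by (auto intro: order.trans[of 0 "delta k"])
  have betam: "0 \<le> beta k \<and> beta k \<le> betam" for k
    using A2_const[of k] unfolding betam_def by (auto intro: Max_ge)
  have c: "0 < (1 - r)\<^sup>2" using r_less_1 by simp
  obtain mubar where "0 < mubar" and rate: "\<And>mu. 0 < mu \<Longrightarrow> mu < mubar \<Longrightarrow>
      (1 - 2 * mu * nu0 + mu\<^sup>2 * delta0\<^sup>2) + mu\<^sup>2 * betam\<^sup>2 \<le> 1 - mu * nu0 \<and> 1 \<le> (1 - mu * nu0) * (1 + (1 - r)\<^sup>2)"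
    using step_size_rate[OF nu0(1) c] by metis
  show ?thesis
  proof (rule exI[of _ mubar], rule conjI[OF \<open>0 < mubar\<close>],
      rule exI[of _ "(\<Sum>k\<in>UNIV. (sigma k)\<^sup>2) / nu0"], intro allI impI, goal_cases)
    case (1 mu M F w psi s)
    then have mu: "0 < mu" "mu < mubar" by auto
    have rho_lt_1: "1 - mu * nu0 < 1" using mu nu0 by simp
    interpret diffusion_recursion "netgrad gradJ" N Abar wstar q "(1 - r)\<^sup>2" mu
        "1 - 2 * mu * nu0 + mu\<^sup>2 * delta0\<^sup>2" "1 - mu * nu0" delta0 betam beta sigma M F w psi s
    proof (rule diffusion_recursion.intro)
      show "(norm ((x - wstar) - mu *\<^sub>R (netgrad gradJ x - netgrad gradJ wstar)))\<^sup>2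
          \<le> (1 - 2 * mu * nu0 + mu\<^sup>2 * delta0\<^sup>2) * (norm (x - wstar))\<^sup>2" for x
        by (rule gradient_step_contraction[OF netgrad_strongly_monotone[OF A1_strong nu0(2)]
            netgrad_lipschitz[OF A1_lip delta0] less_imp_le[OF mu(1)]])
    qed (fact N_self_adjoint N_nonneg N_coercive c N_eq_of_Abar N_wstar q netgrad_lipschitz[OF A1_lip delta0]
        delta0(2) betam mu(1) rate[OF mu, THEN conjunct1] rate[OF mu, THEN conjunct2] rho_lt_1
        | insert 1, elim conjE, assumption)+
    have "mu\<^sup>2 * noise_floor / (1 - (1 - mu * nu0)) = (\<Sum>k\<in>UNIV. (sigma k)\<^sup>2) / nu0 * mu"
      using mu nu0 by (simp add: noise_floor_def power2_eq_square field_simps)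
    then show ?case
      using mean_square_bound by simp
  qed
qed

end
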